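(* Fix any $\epsilon<1/2$ and let $\zeta(r,n)=n^{-1/(\log n)^{\epsilon}}$. Then there is no infinite family of metafunnels that is up-to-$\zeta$ fixating.
   Context: Logarithms are natural. Moran process: given a directed graph $G$ and fitness $r>1$, one vertex (the initial mutant) is a mutant, the rest non-mutants. At each step a vertex $v$ is chosen with probability proportional to fitness (mutants $r$, non-mutants $1$), an out-neighbour $w$ of $v$ is chosen uniformly at random and the state of $v$ is copied to $w$. Extinction: eventually no mutants. An infinite family $\Upsilon$ of directed graphs is up-to-$\zeta$ fixating if for every $r>1$ there is $n_0$ such that for every $G\in\Upsilon$ with $n\ge n_0$ vertices, the extinction probability of the Moran process with fitness $r$ on $G$ from a uniformly random initial mutant is at most $\zeta(r,n)$. For positive integers $k,\ell,m$, the $(k,\ell,m)$-metafunnel has vertex set $V_0\cup V_1\cup\dots\cup V_k$ (disjoint), where $V_0=\{v^*\}$ and for $i\in[k]$, $V_i$ is the disjoint union of sets $V_{i,1},\dots,V_{i,\ell}$ each of size $m^i$; its edge set is $(V_0\times V_k)\cup(V_1\times V_0)\cup\bigcup_{i\in[k-1]}\bigcup_{j\in[\ell]}(V_{i+1,j}\times V_{i,j})$. An infinite family of metafunnels is an infinite set of such graphs. *)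

theory Defs
  imports Complex_Main
begin

type_synonym 'a digraph = "'a set \<times> ('a \<times> 'a) set"

definition out_nbrs :: "('a \<times> 'a) set \<Rightarrow> 'a \<Rightarrow> 'a set" where
  "out_nbrs E v = {w. (v, w) \<in> E}"

definition fitness :: "real \<Rightarrow> 'a set \<Rightarrow> 'a \<Rightarrow> real" where
  "fitness r S v = (if v \<in> S then r else 1)"

definition total_fitness :: "'a set \<Rightarrow> real \<Rightarrow> 'a set \<Rightarrow> real" where
  "total_fitness V r S = (\<Sum>v\<in>V. fitness r S v)"

text \<open>Probability that the Moran process (mutant set S) has reached extinction
  (no mutants) within t steps. A vertex without out-neighbours leaves the state unchanged
  (irrelevant for metafunnels, where every vertex has an out-neighbour).\<close>

fun ext_within :: "'a set \<Rightarrow> ('a \<times> 'a) set \<Rightarrow> real \<Rightarrow> nat \<Rightarrow> 'a set \<Rightarrow> real" where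
  "ext_within V E r 0 S = (if S = {} then 1 else 0)"
| "ext_within V E r (Suc t) S =
     (if S = {} then 1 else
      (\<Sum>v\<in>V. (fitness r S v / total_fitness V r S) *
         (if out_nbrs E v = {} then ext_within V E r t S
          else (\<Sum>w\<in>out_nbrs E v.
                  ext_within V E r t (if v \<in> S then insert w S else S - {w}) / real (card (out_nbrs E v))))))"

text \<open>Extinction probability: probability that eventually there are no mutants
  (the empty state is absorbing, so this is the supremum over t).\<close>

definition extinction_prob :: "'a set \<Rightarrow> ('a \<times> 'a) set \<Rightarrow> real \<Rightarrow> 'a set \<Rightarrow> real" where
  "extinction_prob V E r S = (SUP t. ext_within V E r t S)"

definition mean_extinction :: "real \<Rightarrow> 'a digraph \<Rightarrow> real" where
  "mean_extinction r G = (\<Sum>v\<in>fst G. extinction_prob (fst G) (snd G) r {v}) / real (card (fst G))"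

definition up_to_fixating :: "(real \<Rightarrow> nat \<Rightarrow> real) \<Rightarrow> 'a digraph set \<Rightarrow> bool" where
  "up_to_fixating \<zeta> \<Upsilon> \<longleftrightarrow> infinite \<Upsilon> \<and>
     (\<forall>r>1. \<exists>n0. \<forall>G\<in>\<Upsilon>. card (fst G) \<ge> n0 \<longrightarrow> mean_extinction r G \<le> \<zeta> r (card (fst G)))"

text \<open>Metafunnels. Vertex v* is (0,0,0); V_{i,j} = {(i,j,x) | x < m^i}.\<close>

definition mf_block :: "nat \<Rightarrow> nat \<Rightarrow> nat \<Rightarrow> (nat \<times> nat \<times> nat) set" where
  "mf_block m i j = {(i, j, x) | x. x < m ^ i}"

definition mf_layer :: "nat \<Rightarrow> nat \<Rightarrow> nat \<Rightarrow> (nat \<times> nat \<times> nat) set" where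
  "mf_layer l m i = (\<Union>j\<in>{1..l}. mf_block m i j)"

definition metafunnel :: "nat \<Rightarrow> nat \<Rightarrow> nat \<Rightarrow> (nat \<times> nat \<times> nat) digraph" where
  "metafunnel k l m =
     ({(0,0,0)} \<union> (\<Union>i\<in>{1..k}. mf_layer l m i),
      ({(0,0,0)} \<times> mf_layer l m k) \<union> (mf_layer l m 1 \<times> {(0,0,0)}) \<union>
      (\<Union>i\<in>{1..k-1}. \<Union>j\<in>{1..l}. mf_block m (Suc i) j \<times> mf_block m i j))"

definition is_metafunnel :: "(nat \<times> nat \<times> nat) digraph \<Rightarrow> bool" where
  "is_metafunnel G \<longleftrightarrow> (\<exists>k l m. 0 < k \<and> 0 < l \<and> 0 < m \<and> G = metafunnel k l m)"

end

theory Submission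
  imports Defs "HOL-Real_Asymp.Real_Asymp"
begin

text \<open>Extinction probabilities are bounded from below by potentials: a function of the mutant set
  that is 1 at extinction, at most 0 at fixation, and grows in expectation by a fixed amount at
  every other state is a lower bound for the extinction probability.

  On a (k,l,m)-metafunnel a single mutant outside the top layer has in-weight at least 1, so it
  dies out with probability at least 1/(1+r). For a mutant in the top layer, the product of the
  factors 1/(1+c_i) over all mutants (c_i depending on the layer i), corrected by a multiple of a
  weighted count of the mutants, gives extinction probability of order 2^-(k+2) at r = 2.
  Consequently, at r = 2 the mean extinction probability is at least 1/(3(m+1)) if k \<ge> 2, and at
  least 2^-(k+2)/6 once m is large compared with log n. As n \<ge> m^k, in either case it exceeds
  exp(-(log n)^\<delta>) for any \<delta> > 1/2, whereas n^(-1/(log n)^\<epsilon>) = exp(-(log n)^(1-\<epsilon>)).\<close>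

section \<open>Potential functions for the Moran process\<close>

definition moran_step :: "'a set \<Rightarrow> 'a \<Rightarrow> 'a \<Rightarrow> 'a set" where
  "moran_step S v w = (if v \<in> S then insert w S else S - {w})"

definition next_expectation :: "'a set \<Rightarrow> ('a\<times>'a) set \<Rightarrow> real \<Rightarrow> ('a set \<Rightarrow> real) \<Rightarrow> 'a set \<Rightarrow> real" where
  "next_expectation V E r f S = (\<Sum>v\<in>V. (fitness r S v / total_fitness V r S) *
      (\<Sum>w\<in>out_nbrs E v. f (moran_step S v w) / real (card (out_nbrs E v))))"

definition in_weight :: "'a set \<Rightarrow> ('a \<times> 'a) set \<Rightarrow> 'a \<Rightarrow> real" where
  "in_weight V E x = (\<Sum>v\<in>V. if x \<in> out_nbrs E v then 1 / real (card (out_nbrs E v)) else 0)"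

locale moran_chain =
  fixes V :: "'a set" and E :: "('a\<times>'a) set" and r :: real
  assumes finite_V: "finite V" and V_nonempty: "V \<noteq> {}"
    and out_nbrs_nonempty: "\<And>v. v \<in> V \<Longrightarrow> out_nbrs E v \<noteq> {}"
    and out_nbrs_subset: "\<And>v. v \<in> V \<Longrightarrow> out_nbrs E v \<subseteq> V"
    and r_pos: "r > 0"
begin

lemma finite_out_nbrs: "v \<in> V \<Longrightarrow> finite (out_nbrs E v)"
  using out_nbrs_subset finite_V finite_subset by blast

lemma card_out_nbrs_pos: "v \<in> V \<Longrightarrow> card (out_nbrs E v) > 0"
  using finite_out_nbrs out_nbrs_nonempty card_gt_0_iff by blast

lemma fitness_pos: "fitness r S v > 0"
  using r_pos by (simp add: fitness_def)

lemma total_fitness_pos: "total_fitness V r S > 0"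
  unfolding total_fitness_def using finite_V V_nonempty fitness_pos[of S] by (intro sum_pos) auto

lemma sum_fitness_shares: "(\<Sum>v\<in>V. fitness r S v / total_fitness V r S) = 1"
  using total_fitness_pos[of S] by (simp add: sum_divide_distrib[symmetric] total_fitness_def)

lemma sum_out_nbrs_uniform: "v \<in> V \<Longrightarrow> (\<Sum>w\<in>out_nbrs E v. c / real (card (out_nbrs E v))) = c"
  using card_out_nbrs_pos[of v] by simp

lemma ext_within_Suc_next_expectation: "S \<noteq> {} \<Longrightarrow> ext_within V E r (Suc t) S = next_expectation V E r (ext_within V E r t) S"
  unfolding next_expectation_def moran_step_def using out_nbrs_nonempty by (auto intro!: sum.cong)

lemma ext_within_empty: "ext_within V E r t {} = 1"
  by (cases t) auto

lemma moran_step_subset: "S \<subseteq> V \<Longrightarrow> v \<in> V \<Longrightarrow> w \<in> out_nbrs E v \<Longrightarrow> moran_step S v w \<subseteq> V"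
  unfolding moran_step_def using out_nbrs_subset by auto

lemma next_expectation_mono:
  assumes "S \<subseteq> V" "\<And>S'. S' \<subseteq> V \<Longrightarrow> f S' \<le> g S'"
  shows "next_expectation V E r f S \<le> next_expectation V E r g S"
  unfolding next_expectation_def
proof (rule sum_mono)
  fix v assume v: "v \<in> V"
  have "(\<Sum>w\<in>out_nbrs E v. f (moran_step S v w) / real (card (out_nbrs E v)))
     \<le> (\<Sum>w\<in>out_nbrs E v. g (moran_step S v w) / real (card (out_nbrs E v)))"
    by (rule sum_mono) (use assms moran_step_subset v in \<open>auto intro: divide_right_mono\<close>)
  then show "fitness r S v / total_fitness V r S * (\<Sum>w\<in>out_nbrs E v. f (moran_step S v w) / real (card (out_nbrs E v)))
     \<le> fitness r S v / total_fitness V r S * (\<Sum>w\<in>out_nbrs E v. g (moran_step S v w) / real (card (out_nbrs E v)))"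
    using fitness_pos[of S v] total_fitness_pos[of S] by (intro mult_left_mono) auto
qed

lemma next_expectation_const: "next_expectation V E r (\<lambda>_. c) S = c"
proof -
  have "next_expectation V E r (\<lambda>_. c) S = (\<Sum>v\<in>V. (fitness r S v / total_fitness V r S) * c)"
    unfolding next_expectation_def by (intro sum.cong refl) (use sum_out_nbrs_uniform in auto)
  also have "\<dots> = (\<Sum>v\<in>V. fitness r S v / total_fitness V r S) * c" by (simp add: sum_distrib_right)
  also have "\<dots> = c" using sum_fitness_shares[of S] by simp
  finally show ?thesis .
qed

lemma next_expectation_add: "next_expectation V E r (\<lambda>S'. f S' + g S') S = next_expectation V E r f S + next_expectation V E r g S"
  unfolding next_expectation_def by (simp add: add_divide_distrib sum.distrib distrib_left)

lemma next_expectation_cmult: "next_expectation V E r (\<lambda>S'. c * f S') S = c * next_expectation V E r f S"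
  unfolding next_expectation_def by (simp add: sum_distrib_left algebra_simps)

lemma next_expectation_diff: "next_expectation V E r (\<lambda>S'. f S' - g S') S = next_expectation V E r f S - next_expectation V E r g S"
  unfolding next_expectation_def by (simp add: diff_divide_distrib sum_subtractf right_diff_distrib)

lemma ext_within_bounds: "S \<subseteq> V \<Longrightarrow> 0 \<le> ext_within V E r t S \<and> ext_within V E r t S \<le> 1"
proof (induction t arbitrary: S)
  case 0 then show ?case by simp
next
  case (Suc t)
  show ?case
  proof (cases "S = {}")
    case True then show ?thesis by simp
  next
    case False
    have "next_expectation V E r (\<lambda>_. 0) S \<le> next_expectation V E r (ext_within V E r t) S"
      by (rule next_expectation_mono) (use Suc in auto)
    moreover have "next_expectation V E r (ext_within V E r t) S \<le> next_expectation V E r (\<lambda>_. 1) S"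
      by (rule next_expectation_mono) (use Suc in auto)
    ultimately show ?thesis using False ext_within_Suc_next_expectation[OF False, of t] by (simp add: next_expectation_const)
  qed
qed

lemma extinction_prob_ge_ext_within:
  assumes "S \<subseteq> V" shows "extinction_prob V E r S \<ge> ext_within V E r t S"
  unfolding extinction_prob_def
  by (rule cSUP_upper) (use ext_within_bounds[OF assms] in \<open>auto intro!: bdd_aboveI[where M=1]\<close>)

lemma extinction_prob_nonneg: "S \<subseteq> V \<Longrightarrow> extinction_prob V E r S \<ge> 0"
  using extinction_prob_ge_ext_within[of S 0] ext_within_bounds[of S 0] by linarith

text \<open>By induction on t, ext_within t S \<ge> \<phi> S - max 0 (max \<phi> - t\<gamma>).\<close>

lemma extinction_prob_ge_potential:
  fixes \<phi> :: "'a set \<Rightarrow> real"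
  assumes p0: "\<phi> {} \<le> 1" and pV: "\<phi> V \<le> 0" and g: "\<gamma> > 0"
    and drift: "\<And>S. S \<subseteq> V \<Longrightarrow> S \<noteq> {} \<Longrightarrow> S \<noteq> V \<Longrightarrow> next_expectation V E r \<phi> S \<ge> \<phi> S + \<gamma>"
    and S0: "S0 \<subseteq> V" "S0 \<noteq> {}"
  shows "extinction_prob V E r S0 \<ge> \<phi> S0"
proof -
  have finP: "finite (\<phi> ` Pow V)" using finite_V by simp
  define \<Phi> where "\<Phi> = Max (\<phi> ` Pow V)"
  have Phi: "S \<subseteq> V \<Longrightarrow> \<phi> S \<le> \<Phi>" for S unfolding \<Phi>_def using finP by (intro Max_ge) auto
  define \<delta> where "\<delta> t = max 0 (\<Phi> - real t * \<gamma>)" for t :: nat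
  have claim: "\<forall>S. S \<subseteq> V \<longrightarrow> S \<noteq> {} \<longrightarrow> ext_within V E r t S \<ge> \<phi> S - \<delta> t" for t
  proof (induction t)
    case 0 have "\<phi> S - \<Phi> \<le> 0" if "S \<subseteq> V" for S using Phi[OF that] by simp
    then show ?case by (auto simp: \<delta>_def intro: order_trans[OF _ max.cobounded2])
  next
    case (Suc t)
    show ?case
    proof (intro allI impI)
      fix S assume S: "S \<subseteq> V" "S \<noteq> {}"
      show "ext_within V E r (Suc t) S \<ge> \<phi> S - \<delta> (Suc t)"
      proof (cases "S = V")
        case True
        have "\<delta> (Suc t) \<ge> 0" by (simp add: \<delta>_def)
        then show ?thesis using True pV ext_within_bounds[of V "Suc t"] by auto
      next
        case False
        have pt: "\<phi> S' - \<delta> t \<le> ext_within V E r t S'" if S'V: "S' \<subseteq> V" for S'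
        proof (cases "S' = {}")
          case True then show ?thesis using p0 by (simp add: \<delta>_def ext_within_empty)
        next
          case False then show ?thesis using Suc S'V by auto
        qed
        have "next_expectation V E r (\<lambda>S'. \<phi> S' - \<delta> t) S \<le> next_expectation V E r (ext_within V E r t) S"
          by (rule next_expectation_mono[OF S(1)]) (use pt in auto)
        moreover have "next_expectation V E r (\<lambda>S'. \<phi> S' - \<delta> t) S = next_expectation V E r \<phi> S - \<delta> t"
          using next_expectation_diff[of \<phi> "\<lambda>_. \<delta> t" S] by (simp add: next_expectation_const)
        moreover have "\<delta> (Suc t) \<ge> \<delta> t - \<gamma>"
          unfolding \<delta>_def of_nat_Suc distrib_right using g
          by (cases "\<Phi> - real t * \<gamma> \<ge> 0"; cases "\<Phi> - (real t * \<gamma> + 1 * \<gamma>) \<ge> 0") (simp_all add: max_def)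
        ultimately show ?thesis using drift[OF S False] ext_within_Suc_next_expectation[OF S(2), of t] by linarith
      qed
    qed
  qed
  obtain t :: nat where t: "real t \<ge> \<Phi> / \<gamma>" using real_arch_simple by blast
  have "real t * \<gamma> \<ge> \<Phi>" using t g by (simp add: field_simps)
  then have "\<delta> t = 0" by (simp add: \<delta>_def)
  then have "ext_within V E r t S0 \<ge> \<phi> S0" using claim[of t] S0 by simp
  then show ?thesis using extinction_prob_ge_ext_within[OF S0(1), of t] by linarith
qed

lemma extinction_prob_ge_combined_potential:
  fixes \<psi> h :: "'a set \<Rightarrow> real"
  assumes psi0: "\<psi> {} = 1" and psiV: "\<psi> V \<ge> 0" and h0: "h {} = 0" and hV: "h V \<ge> 0"
    and beta: "\<beta> \<ge> 0" and g: "\<gamma> > 0"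
    and drift: "\<And>S. S \<subseteq> V \<Longrightarrow> S \<noteq> {} \<Longrightarrow> S \<noteq> V \<Longrightarrow>
        next_expectation V E r \<psi> S + \<beta> * next_expectation V E r h S \<ge> \<psi> S + \<beta> * h S + \<gamma>"
    and S0: "S0 \<subseteq> V" "S0 \<noteq> {}"
  shows "extinction_prob V E r S0 \<ge> \<psi> S0 - \<psi> V - \<beta> * (h V - h S0)"
proof -
  define \<phi> where "\<phi> S = (if S = {} then 1 else \<psi> S - \<psi> V - \<beta> * (h V - h S))" for S
  define \<chi> where "\<chi> S = (\<psi> S + \<beta> * h S) - (\<psi> V + \<beta> * h V)" for S
  have ex\<chi>: "next_expectation V E r \<chi> S = (next_expectation V E r \<psi> S + \<beta> * next_expectation V E r h S) - (\<psi> V + \<beta> * h V)" for S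
    unfolding \<chi>_def by (simp add: next_expectation_diff next_expectation_add next_expectation_cmult next_expectation_const)
  have le: "\<chi> S' \<le> \<phi> S'" for S'
  proof (cases "S' = {}")
    case True
    have "0 \<le> \<beta> * h V" using beta hV by simp
    then show ?thesis using True psiV h0 psi0 by (simp add: \<chi>_def \<phi>_def)
  next
    case False then show ?thesis by (simp add: \<chi>_def \<phi>_def algebra_simps)
  qed
  have "extinction_prob V E r S0 \<ge> \<phi> S0"
  proof (rule extinction_prob_ge_potential[OF _ _ g _ S0])
    show "\<phi> {} \<le> 1" by (simp add: \<phi>_def)
    show "\<phi> V \<le> 0" using V_nonempty by (simp add: \<phi>_def)
    fix S assume S: "S \<subseteq> V" "S \<noteq> {}" "S \<noteq> V"
    have "next_expectation V E r \<chi> S \<le> next_expectation V E r \<phi> S" by (rule next_expectation_mono[OF S(1)]) (simp add: le)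
    then show "next_expectation V E r \<phi> S \<ge> \<phi> S + \<gamma>"
      using drift[OF S] ex\<chi>[of S] S(2) by (simp add: \<phi>_def algebra_simps)
  qed
  then show ?thesis using S0 by (simp add: \<phi>_def)
qed

lemma next_expectation_minus_eq: "next_expectation V E r f S - f S = (1 / total_fitness V r S) *
    (\<Sum>v\<in>V. (fitness r S v / real (card (out_nbrs E v))) * (\<Sum>w\<in>out_nbrs E v. f (moran_step S v w) - f S))"
proof -
  have "next_expectation V E r f S - f S = next_expectation V E r (\<lambda>S'. f S' - f S) S" by (simp add: next_expectation_diff next_expectation_const)
  also have "\<dots> = (1 / total_fitness V r S) *
    (\<Sum>v\<in>V. (fitness r S v / real (card (out_nbrs E v))) * (\<Sum>w\<in>out_nbrs E v. f (moran_step S v w) - f S))"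
    unfolding next_expectation_def sum_distrib_left
    by (intro sum.cong refl) (simp add: sum_divide_distrib[symmetric])
  finally show ?thesis .
qed

lemma sum_out_nbrs_single_mutant:
  fixes p :: real
  assumes v: "v \<in> V" and nl: "x \<notin> out_nbrs E x"
  defines psi_def: "\<psi> \<equiv> \<lambda>S. if S = {} then 1 else if S = {x} then p else 0"
    and d_def: "d \<equiv> real (card (out_nbrs E v))"
  shows "(\<Sum>w\<in>out_nbrs E v. \<psi> (moran_step {x} v w) / d)
    = (if v = x then 0 else p + (1 - p) * (if x \<in> out_nbrs E v then 1 / d else 0))"
proof (cases "v = x")
  case True
  have "\<psi> (moran_step {x} v w) = 0" if "w \<in> out_nbrs E v" for w
    using True nl that by (auto simp: moran_step_def psi_def)
  then show ?thesis using True by simp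
next
  case False
  have e: "\<psi> (moran_step {x} v w) = p + (if w = x then 1 - p else 0)" for w
    using False by (auto simp: moran_step_def psi_def)
  have "(\<Sum>w\<in>out_nbrs E v. \<psi> (moran_step {x} v w) / d)
      = (\<Sum>w\<in>out_nbrs E v. p / d) + (\<Sum>w\<in>out_nbrs E v. (if w = x then 1 - p else 0) / d)"
    unfolding e by (simp add: add_divide_distrib sum.distrib)
  also have "(\<Sum>w\<in>out_nbrs E v. p / d) = p" using sum_out_nbrs_uniform[OF v] by (simp add: d_def)
  also have "(\<Sum>w\<in>out_nbrs E v. (if w = x then 1 - p else 0) / d)
      = (\<Sum>w\<in>out_nbrs E v. if w = x then (1 - p) / d else 0)"
    by (intro sum.cong) auto
  also have "\<dots> = (if x \<in> out_nbrs E v then (1 - p) / d else 0)"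
    using finite_out_nbrs[OF v] by simp
  finally show ?thesis using False by simp
qed

lemma next_expectation_single_mutant:
  assumes x: "x \<in> V" and nl: "x \<notin> out_nbrs E x"
  shows "next_expectation V E r (\<lambda>S. if S = {} then 1 else if S = {x} then p else 0) {x}
    = (p * (real (card V) - 1) + (1 - p) * in_weight V E x) / (r + (real (card V) - 1))"
proof -
  let ?\<psi> = "\<lambda>S. if S = {} then 1 else if S = {x} then (p::real) else 0"
  let ?TF = "total_fitness V r {x}"
  let ?d = "\<lambda>v. real (card (out_nbrs E v))"
  note inner = sum_out_nbrs_single_mutant[OF _ nl, of _ p]
  have fit: "fitness r {x} v = (if v = x then r else 1)" for v by (simp add: fitness_def)
  have "next_expectation V E r ?\<psi> {x} = (\<Sum>v\<in>V. (fitness r {x} v / ?TF) *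
      (if v = x then 0 else p + (1 - p) * (if x \<in> out_nbrs E v then 1 / ?d v else 0)))"
    unfolding next_expectation_def by (intro sum.cong refl) (simp add: inner)
  also have "\<dots> = (\<Sum>v\<in>V. (if v = x then 0 else p) + (1 - p) * (if x \<in> out_nbrs E v then 1 / ?d v else 0)) / ?TF"
    unfolding sum_divide_distrib using nl
    by (intro sum.cong refl) (auto simp: fit)
  also have "\<dots> = ((\<Sum>v\<in>V. if v = x then 0 else p) + (1 - p) * in_weight V E x) / ?TF"
    by (simp add: sum.distrib in_weight_def sum_distrib_left)
  also have "(\<Sum>v\<in>V. if v = x then 0 else p) = p * (real (card V) - 1)"
  proof -
    have "(\<Sum>v\<in>V. if v = x then 0 else p) = (\<Sum>v\<in>V. p - (if v = x then p else 0))"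
      by (intro sum.cong) auto
    also have "\<dots> = p * real (card V) - p" using finite_V x by (simp add: sum_subtractf)
    finally show ?thesis by (simp add: algebra_simps)
  qed
  also have "?TF = r + (real (card V) - 1)"
  proof -
    have "?TF = (\<Sum>v\<in>V. (if v = x then r - 1 else 0) + 1)"
      unfolding total_fitness_def by (intro sum.cong refl) (simp add: fit)
    also have "\<dots> = r - 1 + real (card V)" using finite_V x by (simp add: sum.distrib sum.If_cases)
    finally show ?thesis by simp
  qed
  finally show ?thesis .
qed

lemma next_expectation_single_mutant_ge:
  assumes x: "x \<in> V" and nl: "x \<notin> out_nbrs E x"
    and p: "0 \<le> p" "p * (in_weight V E x + r) \<le> in_weight V E x"
  shows "next_expectation V E r (\<lambda>S. if S = {} then 1 else if S = {x} then p else 0) {x} \<ge> p"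
proof -
  have cV: "real (card V) \<ge> 1" using finite_V x card_gt_0_iff by (metis Suc_leI empty_iff of_nat_1 of_nat_le_iff One_nat_def)
  have pos: "r + (real (card V) - 1) > 0" using r_pos cV by linarith
  have "p * (r + (real (card V) - 1)) \<le> p * (real (card V) - 1) + (1 - p) * in_weight V E x"
    using p by (simp add: algebra_simps)
  then show ?thesis unfolding next_expectation_single_mutant[OF x nl] using pos by (simp add: le_divide_eq)
qed

lemma next_expectation_nonneg:
  assumes "S \<subseteq> V" "\<And>S'. f S' \<ge> 0" shows "next_expectation V E r f S \<ge> 0"
  using next_expectation_mono[of S "\<lambda>_. 0" f] assms by (simp add: next_expectation_const)

end

section \<open>Metafunnels\<close>

lemma mem_block[simp]: "(a,b,c) \<in> mf_block m i j \<longleftrightarrow> a = i \<and> b = j \<and> c < m ^ i"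
  by (auto simp: mf_block_def)

lemma mem_layer[simp]: "(a,b,c) \<in> mf_layer l m i \<longleftrightarrow> a = i \<and> 1 \<le> b \<and> b \<le> l \<and> c < m ^ i"
  by (auto simp: mf_layer_def)

lemma block_eq: "mf_block m i j = (\<lambda>x. (i,j,x)) ` {..<m^i}"
  by (auto simp: mf_block_def)

lemma card_block: "card (mf_block m i j) = m ^ i"
  unfolding block_eq by (subst card_image) (auto simp: inj_on_def)

lemma finite_block[simp]: "finite (mf_block m i j)"
  unfolding block_eq by simp

lemma finite_layer[simp]: "finite (mf_layer l m i)"
  unfolding mf_layer_def by simp

text \<open>All potentials used below change, when v reproduces onto w, by an amount that depends only
  on whether v and w are mutants and on the layer of w.\<close>

definition layer_increment :: "(nat \<Rightarrow> real) \<Rightarrow> (nat \<Rightarrow> real) \<Rightarrow> bool \<Rightarrow> bool \<Rightarrow> nat \<Rightarrow> real" where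
  "layer_increment \<alpha> \<beta> bv bw i = (if bv \<and> \<not> bw then \<alpha> i else 0) + (if \<not> bv \<and> bw then \<beta> i else 0)"

lemma sum_if_card: "(\<Sum>x<M. if P x then A else B) = A * real (card {x. x < M \<and> P x}) + B * (real M - real (card {x. x < M \<and> P x}))"
proof -
  have "(\<Sum>x<M. if P x then A else B) = (\<Sum>x<M. B + (if P x then A - B else 0))"
    by (intro sum.cong) auto
  also have "\<dots> = B * real M + (\<Sum>x<M. if P x then A - B else 0)"
    by (simp add: sum.distrib)
  also have "(\<Sum>x<M. if P x then A - B else 0) = (\<Sum>x\<in>{x\<in>{..<M}. P x}. A - B)"
    by (rule sum.inter_filter[symmetric]) simp
  also have "{x\<in>{..<M}. P x} = {x. x < M \<and> P x}" by auto
  finally show ?thesis by (simp add: algebra_simps)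
qed

lemma telescoping_chain_ge:
  fixes G L x :: "nat \<Rightarrow> real"
  assumes "1 \<le> k"
    and x: "\<And>i. 1 \<le> i \<Longrightarrow> i \<le> k \<Longrightarrow> 0 \<le> x i \<and> x i \<le> 1"
    and L: "\<And>i. 1 \<le> i \<Longrightarrow> i < k \<Longrightarrow> L i \<le> G (Suc i)"
    and G: "\<And>i. 1 \<le> i \<Longrightarrow> i < k \<Longrightarrow> G i \<le> G (Suc i)"
  shows "(\<Sum>i\<in>{1..<k}. G i * x i * (1 - x (Suc i)) - L i * x (Suc i) * (1 - x i)) \<ge> G 1 * x 1 - G k * x k"
proof -
  have "(\<Sum>i\<in>{1..<k}. G i * x i * (1 - x (Suc i)) - L i * x (Suc i) * (1 - x i))
      \<ge> (\<Sum>i\<in>{1..<k}. (- G (Suc i) * x (Suc i)) - (- G i * x i))"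
  proof (rule sum_mono)
    fix i assume i: "i \<in> {1..<k}"
    have xi: "0 \<le> x i" "x i \<le> 1" "0 \<le> x (Suc i)" "x (Suc i) \<le> 1" using x[of i] x[of "Suc i"] i by auto
    have "L i * (x (Suc i) * (1 - x i)) \<le> G (Suc i) * (x (Suc i) * (1 - x i))"
      using L[of i] i xi by (intro mult_right_mono) auto
    moreover have "(G (Suc i) - G i) * (x i * x (Suc i)) \<ge> 0" using G[of i] i xi by auto
    ultimately show "(- G (Suc i) * x (Suc i)) - (- G i * x i) \<le> G i * x i * (1 - x (Suc i)) - L i * x (Suc i) * (1 - x i)"
      by (simp add: algebra_simps)
  qed
  also have "(\<Sum>i\<in>{1..<k}. (- G (Suc i) * x (Suc i)) - (- G i * x i)) = (- G k * x k) - (- G 1 * x 1)"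
    using assms(1) by (rule sum_Suc_diff')
  finally show ?thesis by simp
qed

lemma ge_of_ge_perturbation:
  fixes a b c d :: real
  assumes "\<And>e. e > 0 \<Longrightarrow> a \<ge> b - (c + e) * d" "d \<ge> 0"
  shows "a \<ge> b - c * d"
proof (rule ccontr)
  assume "\<not> ?thesis"
  then have g: "b - c * d - a > 0" by simp
  define e where "e = (b - c * d - a) / (2 * (d + 1))"
  have e: "e > 0" using g assms(2) by (simp add: e_def)
  have "e * d < b - c * d - a"
  proof -
    have "e * d \<le> e * (d + 1)" using e by simp
    also have "\<dots> = (b - c * d - a) / 2"
    proof -
      have "d + 1 \<noteq> 0" using assms(2) by simp
      then show ?thesis unfolding e_def by (simp add: field_simps)
    qed
    also have "\<dots> < b - c * d - a" using g by simp
    finally show ?thesis .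
  qed
  then show False using assms(1)[OF e] by (simp add: algebra_simps)
qed

locale metafunnel_params =
  fixes k l m :: nat
  assumes kpos: "0 < k" and lpos: "0 < l" and mpos: "0 < m"
begin

definition V :: "(nat \<times> nat \<times> nat) set" where "V = fst (metafunnel k l m)"
definition E :: "((nat \<times> nat \<times> nat) \<times> (nat \<times> nat \<times> nat)) set" where "E = snd (metafunnel k l m)"
definition apex :: "nat \<times> nat \<times> nat" where "apex = (0,0,0)"

lemma mem_V: "(a,b,c) \<in> V \<longleftrightarrow> (a = 0 \<and> b = 0 \<and> c = 0) \<or> (1 \<le> a \<and> a \<le> k \<and> 1 \<le> b \<and> b \<le> l \<and> c < m ^ a)"
  unfolding V_def metafunnel_def by auto

lemma apex_in_V: "apex \<in> V" by (simp add: apex_def mem_V)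

lemma mem_E: "((a,b,c),(a',b',c')) \<in> E \<longleftrightarrow>
   (a = 0 \<and> b = 0 \<and> c = 0 \<and> a' = k \<and> 1 \<le> b' \<and> b' \<le> l \<and> c' < m ^ k) \<or>
   (a = 1 \<and> 1 \<le> b \<and> b \<le> l \<and> c < m \<and> a' = 0 \<and> b' = 0 \<and> c' = 0) \<or>
   (2 \<le> a \<and> a \<le> k \<and> 1 \<le> b \<and> b \<le> l \<and> c < m ^ a \<and> a' = a - 1 \<and> b' = b \<and> c' < m ^ (a - 1))"
proof
  assume "((a,b,c),(a',b',c')) \<in> E"
  then show "(a = 0 \<and> b = 0 \<and> c = 0 \<and> a' = k \<and> 1 \<le> b' \<and> b' \<le> l \<and> c' < m ^ k) \<or>
   (a = 1 \<and> 1 \<le> b \<and> b \<le> l \<and> c < m \<and> a' = 0 \<and> b' = 0 \<and> c' = 0) \<or>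
   (2 \<le> a \<and> a \<le> k \<and> 1 \<le> b \<and> b \<le> l \<and> c < m ^ a \<and> a' = a - 1 \<and> b' = b \<and> c' < m ^ (a - 1))"
    unfolding E_def metafunnel_def by auto
next
  assume "(a = 0 \<and> b = 0 \<and> c = 0 \<and> a' = k \<and> 1 \<le> b' \<and> b' \<le> l \<and> c' < m ^ k) \<or>
   (a = 1 \<and> 1 \<le> b \<and> b \<le> l \<and> c < m \<and> a' = 0 \<and> b' = 0 \<and> c' = 0) \<or>
   (2 \<le> a \<and> a \<le> k \<and> 1 \<le> b \<and> b \<le> l \<and> c < m ^ a \<and> a' = a - 1 \<and> b' = b \<and> c' < m ^ (a - 1))"
  then consider "a = 0 \<and> b = 0 \<and> c = 0 \<and> a' = k \<and> 1 \<le> b' \<and> b' \<le> l \<and> c' < m ^ k"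
    | "a = 1 \<and> 1 \<le> b \<and> b \<le> l \<and> c < m \<and> a' = 0 \<and> b' = 0 \<and> c' = 0"
    | "2 \<le> a \<and> a \<le> k \<and> 1 \<le> b \<and> b \<le> l \<and> c < m ^ a \<and> a' = a - 1 \<and> b' = b \<and> c' < m ^ (a - 1)"
    by blast
  then show "((a,b,c),(a',b',c')) \<in> E"
  proof cases
    case 3
    then have "((a,b,c),(a',b',c')) \<in> mf_block m (Suc (a - 1)) b \<times> mf_block m (a - 1) b"
      "a - 1 \<in> {1..k-1}" "b \<in> {1..l}" by auto
    then show ?thesis unfolding E_def metafunnel_def by auto
  qed (auto simp: E_def metafunnel_def)
qed

lemma out_nbrs_apex: "out_nbrs E apex = mf_layer l m k"
  unfolding out_nbrs_def apex_def by (auto simp: mem_E)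

lemma out_nbrs_layer_1: "1 \<le> j \<Longrightarrow> j \<le> l \<Longrightarrow> x < m \<Longrightarrow> out_nbrs E (1,j,x) = {apex}"
  unfolding out_nbrs_def apex_def by (auto simp: mem_E)

lemma out_nbrs_layer_Suc: "1 \<le> i \<Longrightarrow> i < k \<Longrightarrow> 1 \<le> j \<Longrightarrow> j \<le> l \<Longrightarrow> x < m ^ Suc i \<Longrightarrow>
    out_nbrs E (Suc i,j,x) = mf_block m i j"
  unfolding out_nbrs_def by (auto simp: mem_E)

lemma V_eq_blocks: "V = insert apex (\<Union>i\<in>{1..k}. \<Union>j\<in>{1..l}. mf_block m i j)"
  by (auto simp: mem_V apex_def)

lemma finite_V: "finite V" unfolding V_eq_blocks by simp

lemma card_V_pos: "card V > 0" using finite_V apex_in_V card_gt_0_iff by fastforce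


lemma out_nbrs_subset: "v \<in> V \<Longrightarrow> out_nbrs E v \<subseteq> V"
proof
  fix w assume "w \<in> out_nbrs E v"
  then have "(v,w) \<in> E" by (simp add: out_nbrs_def)
  then show "w \<in> V" using kpos
    by (cases v; cases w) (auto simp: mem_E mem_V)
qed

lemma out_nbrs_nonempty: "v \<in> V \<Longrightarrow> out_nbrs E v \<noteq> {}"
proof -
  assume v: "v \<in> V"
  obtain a b c where abc: "v = (a,b,c)" by (cases v) auto
  show ?thesis
  proof (cases "a = 0")
    case True
    then have "v = apex" using v abc by (auto simp: mem_V apex_def)
    moreover have "(k,1,0) \<in> mf_layer l m k" using lpos mpos by (simp add: Suc_le_eq)
    ultimately show ?thesis by (metis empty_iff out_nbrs_apex)
  next
    case False
    then have a: "1 \<le> a" "a \<le> k" "1 \<le> b" "b \<le> l" "c < m ^ a" using v abc by (auto simp: mem_V)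
    show ?thesis
    proof (cases "a = 1")
      case True then show ?thesis using a abc out_nbrs_layer_1[of b c] by simp
    next
      case False
      then obtain i where i: "a = Suc i" "1 \<le> i" using a by (cases a) auto
      have "(i,b,0) \<in> mf_block m i b" using mpos by simp
      then show ?thesis using a i abc out_nbrs_layer_Suc[of i b c] by (metis Suc_le_eq empty_iff)
    qed
  qed
qed

lemma sum_blocks: "(\<Sum>v\<in>(\<Union>i\<in>I. \<Union>j\<in>J. mf_block m i j). F v)
    = (\<Sum>i\<in>I. \<Sum>j\<in>J. \<Sum>x<m^i. F (i,j,x))" if "finite I" "finite J"
proof -
  have "(\<Sum>v\<in>(\<Union>i\<in>I. \<Union>j\<in>J. mf_block m i j). F v) = (\<Sum>i\<in>I. \<Sum>v\<in>(\<Union>j\<in>J. mf_block m i j). F v)"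
    using that by (intro sum.UNION_disjoint) auto
  also have "\<dots> = (\<Sum>i\<in>I. \<Sum>j\<in>J. \<Sum>v\<in>mf_block m i j. F v)"
    using that by (intro sum.cong refl sum.UNION_disjoint) auto
  also have "\<dots> = (\<Sum>i\<in>I. \<Sum>j\<in>J. \<Sum>x<m^i. F (i,j,x))"
    unfolding block_eq by (intro sum.cong refl) (simp add: sum.reindex inj_on_def)
  finally show ?thesis .
qed

lemma sum_V_blocks: "(\<Sum>v\<in>V. F v) = F apex + (\<Sum>i\<in>{1..k}. \<Sum>j\<in>{1..l}. \<Sum>x<m^i. F (i,j,x))"
proof -
  have "apex \<notin> (\<Union>i\<in>{1..k}. \<Union>j\<in>{1..l}. mf_block m i j)" by (auto simp: apex_def mf_block_def)
  then show ?thesis unfolding V_eq_blocks by (simp add: sum_blocks)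
qed

lemma layer_eq: "mf_layer l m i = (\<Union>i'\<in>{i}. \<Union>j\<in>{1..l}. mf_block m i' j)"
  by (auto simp: mf_layer_def)

lemma sum_layer: "(\<Sum>v\<in>mf_layer l m i. F v) = (\<Sum>j\<in>{1..l}. \<Sum>x<m^i. F (i,j,x))"
  by (subst layer_eq, subst sum_blocks) auto

lemma card_layer: "card (mf_layer l m i) = l * m ^ i"
proof -
  have "card (mf_layer l m i) = (\<Sum>v\<in>mf_layer l m i. 1::nat)" by (rule card_eq_sum)
  also have "\<dots> = (\<Sum>j\<in>{1..l}. \<Sum>x<m^i. 1::nat)" by (rule sum_layer)
  also have "\<dots> = l * m ^ i" by simp
  finally show ?thesis .
qed

definition block_card :: "(nat\<times>nat\<times>nat) set \<Rightarrow> nat \<Rightarrow> nat \<Rightarrow> nat" where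
  "block_card S i j = card {x. x < m ^ i \<and> (i,j,x) \<in> S}"

definition block_count :: "(nat\<times>nat\<times>nat) set \<Rightarrow> nat \<Rightarrow> nat \<Rightarrow> real" where
  "block_count S i j = real (block_card S i j)"

definition apex_ind :: "(nat\<times>nat\<times>nat) set \<Rightarrow> real" where
  "apex_ind S = (if apex \<in> S then 1 else 0)"

text \<open>The contribution of branch j to the drift of such a potential, from the edges of the apex
  into layer k, of layer 1 into the apex, and of layer i+1 into layer i.\<close>

definition block_drift :: "real \<Rightarrow> (nat\<times>nat\<times>nat) set \<Rightarrow> (nat \<Rightarrow> real) \<Rightarrow> (nat \<Rightarrow> real) \<Rightarrow> nat \<Rightarrow> real" where
  "block_drift r S \<alpha> \<beta> j =
     (1 / (real l * real m ^ k)) * (r * apex_ind S * (real m ^ k - block_count S k j) * \<alpha> k + (1 - apex_ind S) * block_count S k j * \<beta> k)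
   + (r * block_count S 1 j * (1 - apex_ind S) * \<alpha> 0 + (real m - block_count S 1 j) * apex_ind S * \<beta> 0)
   + (\<Sum>i\<in>{1..<k}. (1 / real m ^ i) * (r * block_count S (Suc i) j * (real m ^ i - block_count S i j) * \<alpha> i
        + (real m ^ Suc i - block_count S (Suc i) j) * block_count S i j * \<beta> i))"

lemma sum_layer_increment: "(\<Sum>x<m^i. layer_increment \<alpha> \<beta> bv ((i,j,x) \<in> S) i) = (if bv then (real m ^ i - block_count S i j) * \<alpha> i else block_count S i j * \<beta> i)"
proof (cases bv)
  case True
  then have "(\<Sum>x<m^i. layer_increment \<alpha> \<beta> bv ((i,j,x) \<in> S) i) = (\<Sum>x<m^i. if (i,j,x) \<in> S then 0 else \<alpha> i)"
    by (intro sum.cong) (auto simp: layer_increment_def)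
  then show ?thesis using True by (simp add: sum_if_card block_count_def block_card_def algebra_simps)
next
  case False
  then have "(\<Sum>x<m^i. layer_increment \<alpha> \<beta> bv ((i,j,x) \<in> S) i) = (\<Sum>x<m^i. if (i,j,x) \<in> S then \<beta> i else 0)"
    by (intro sum.cong) (auto simp: layer_increment_def)
  then show ?thesis using False by (simp add: sum_if_card block_count_def block_card_def algebra_simps)
qed

lemma sum_layers_split: "(\<Sum>i\<in>{1..k}. H i) = H 1 + (\<Sum>i\<in>{1..<k}. H (Suc i))"
proof -
  have "(\<Sum>i\<in>{1..k}. H i) = H 1 + (\<Sum>i\<in>{Suc 1..k}. H i)" using kpos by (simp add: sum.atLeast_Suc_atMost)
  also have "{Suc 1..k} = Suc ` {1..<k}" by (auto simp: image_iff)
  also have "(\<Sum>i\<in>Suc ` {1..<k}. H i) = (\<Sum>i\<in>{1..<k}. H (Suc i))"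
  proof -
    have "inj_on Suc {1..<k}" by simp
    from sum.reindex[OF this, of H] show ?thesis by (simp only: o_def)
  qed
  finally show ?thesis .
qed

definition vertex_drift :: "real \<Rightarrow> (nat\<times>nat\<times>nat) set \<Rightarrow> (nat \<Rightarrow> real) \<Rightarrow> (nat \<Rightarrow> real)
    \<Rightarrow> nat \<times> nat \<times> nat \<Rightarrow> real" where
  "vertex_drift r S \<alpha> \<beta> v = fitness r S v / real (card (out_nbrs E v)) *
     (\<Sum>w\<in>out_nbrs E v. layer_increment \<alpha> \<beta> (v \<in> S) (w \<in> S) (fst w))"

lemma vertex_drift_apex:
  "vertex_drift r S \<alpha> \<beta> apex = (\<Sum>j\<in>{1..l}. (1 / (real l * real m ^ k)) *
     (r * apex_ind S * (real m ^ k - block_count S k j) * \<alpha> k + (1 - apex_ind S) * block_count S k j * \<beta> k))"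
proof -
  have "vertex_drift r S \<alpha> \<beta> apex = fitness r S apex / (real l * real m ^ k) *
      (\<Sum>j\<in>{1..l}. \<Sum>x<m^k. layer_increment \<alpha> \<beta> (apex \<in> S) ((k,j,x) \<in> S) k)"
    unfolding vertex_drift_def out_nbrs_apex card_layer sum_layer by simp
  then show ?thesis
    unfolding sum_layer_increment sum_distrib_left by (auto simp: fitness_def apex_ind_def intro: sum.cong)
qed

lemma sum_vertex_drift_layer_1:
  assumes j: "j \<in> {1..l}"
  shows "(\<Sum>x<m. vertex_drift r S \<alpha> \<beta> (1,j,x)) =
    r * block_count S 1 j * (1 - apex_ind S) * \<alpha> 0 + (real m - block_count S 1 j) * apex_ind S * \<beta> 0"
proof -
  have "(\<Sum>x<m. vertex_drift r S \<alpha> \<beta> (1,j,x))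
      = (\<Sum>x<m. if (1,j,x) \<in> S then r * (1 - apex_ind S) * \<alpha> 0 else apex_ind S * \<beta> 0)"
  proof (intro sum.cong refl)
    fix x assume "x \<in> {..<m}"
    then have "out_nbrs E (1,j,x) = {apex}" using j by (intro out_nbrs_layer_1) auto
    then show "vertex_drift r S \<alpha> \<beta> (1,j,x) = (if (1,j,x) \<in> S then r * (1 - apex_ind S) * \<alpha> 0 else apex_ind S * \<beta> 0)"
      unfolding vertex_drift_def by (auto simp: fitness_def layer_increment_def apex_ind_def apex_def)
  qed
  also have "\<dots> = r * block_count S 1 j * (1 - apex_ind S) * \<alpha> 0 + (real m - block_count S 1 j) * apex_ind S * \<beta> 0"
    by (simp add: sum_if_card block_count_def block_card_def algebra_simps)
  finally show ?thesis .
qed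

lemma sum_vertex_drift_layer_Suc:
  assumes j: "j \<in> {1..l}" and i: "i \<in> {1..<k}"
  shows "(\<Sum>x<m^Suc i. vertex_drift r S \<alpha> \<beta> (Suc i,j,x)) =
    (1 / real m ^ i) * (r * block_count S (Suc i) j * (real m ^ i - block_count S i j) * \<alpha> i
      + (real m ^ Suc i - block_count S (Suc i) j) * block_count S i j * \<beta> i)"
proof -
  have "(\<Sum>x<m^Suc i. vertex_drift r S \<alpha> \<beta> (Suc i,j,x)) = (\<Sum>x<m^Suc i.
      if (Suc i,j,x) \<in> S then r * (real m ^ i - block_count S i j) * \<alpha> i / real m ^ i
      else block_count S i j * \<beta> i / real m ^ i)"
  proof (intro sum.cong refl)
    fix x assume x: "x \<in> {..<m ^ Suc i}"
    have "out_nbrs E (Suc i, j, x) = mf_block m i j" using i j x by (intro out_nbrs_layer_Suc) auto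
    moreover have "(\<Sum>w\<in>mf_block m i j. layer_increment \<alpha> \<beta> b (w \<in> S) (fst w))
        = (\<Sum>y<m^i. layer_increment \<alpha> \<beta> b ((i,j,y) \<in> S) i)" for b
      unfolding block_eq by (simp add: sum.reindex inj_on_def)
    ultimately show "vertex_drift r S \<alpha> \<beta> (Suc i, j, x) =
        (if (Suc i,j,x) \<in> S then r * (real m ^ i - block_count S i j) * \<alpha> i / real m ^ i
         else block_count S i j * \<beta> i / real m ^ i)"
      unfolding vertex_drift_def by (simp add: sum_layer_increment card_block fitness_def)
  qed
  also have "\<dots> = (1 / real m ^ i) * (r * block_count S (Suc i) j * (real m ^ i - block_count S i j) * \<alpha> i
      + (real m ^ Suc i - block_count S (Suc i) j) * block_count S i j * \<beta> i)"
    by (simp add: sum_if_card block_count_def block_card_def algebra_simps diff_divide_distrib add_divide_distrib)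
  finally show ?thesis .
qed

lemma sum_vertex_drift: "(\<Sum>v\<in>V. vertex_drift r S \<alpha> \<beta> v) = (\<Sum>j\<in>{1..l}. block_drift r S \<alpha> \<beta> j)"
proof -
  let ?G = "vertex_drift r S \<alpha> \<beta>"
  have "(\<Sum>v\<in>V. ?G v) = ?G apex + (\<Sum>i\<in>{1..k}. \<Sum>j\<in>{1..l}. \<Sum>x<m^i. ?G (i,j,x))"
    by (rule sum_V_blocks)
  also have "(\<Sum>i\<in>{1..k}. \<Sum>j\<in>{1..l}. \<Sum>x<m^i. ?G (i,j,x)) = (\<Sum>j\<in>{1..l}. \<Sum>i\<in>{1..k}. \<Sum>x<m^i. ?G (i,j,x))"
    by (rule sum.swap)
  also have "\<dots> = (\<Sum>j\<in>{1..l}. (\<Sum>x<m^1. ?G (1,j,x)) + (\<Sum>i\<in>{1..<k}. \<Sum>x<m^Suc i. ?G (Suc i,j,x)))"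
    by (simp only: sum_layers_split)
  also have "\<dots> = (\<Sum>j\<in>{1..l}. (r * block_count S 1 j * (1 - apex_ind S) * \<alpha> 0 + (real m - block_count S 1 j) * apex_ind S * \<beta> 0)
      + (\<Sum>i\<in>{1..<k}. (1 / real m ^ i) * (r * block_count S (Suc i) j * (real m ^ i - block_count S i j) * \<alpha> i
        + (real m ^ Suc i - block_count S (Suc i) j) * block_count S i j * \<beta> i)))"
    by (intro sum.cong refl arg_cong2[where f="(+)"])
      (simp_all add: sum_vertex_drift_layer_1[simplified] sum_vertex_drift_layer_Suc[simplified])
  finally show ?thesis unfolding vertex_drift_apex block_drift_def by (simp add: sum.distrib add.assoc)
qed

lemma moran_chain_metafunnel: "r > 0 \<Longrightarrow> moran_chain V E r"
  by unfold_locales (use finite_V apex_in_V out_nbrs_nonempty out_nbrs_subset in auto)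

lemma block_count_le: "block_count S i j \<le> real m ^ i"
proof -
  have "card {x. x < m ^ i \<and> (i,j,x) \<in> S} \<le> card {..<m^i}" by (intro card_mono) auto
  then show ?thesis by (simp add: block_count_def block_card_def flip: of_nat_power)
qed

lemma block_count_nonneg: "block_count S i j \<ge> 0" by (simp add: block_count_def)

lemma next_expectation_minus_layer_increment:
  assumes r: "r > 0" and S: "S \<subseteq> V"
    and step: "\<And>v w. v \<in> V \<Longrightarrow> w \<in> out_nbrs E v \<Longrightarrow> f (moran_step S v w) - f S = c * layer_increment \<alpha> \<beta> (v \<in> S) (w \<in> S) (fst w)"
  shows "next_expectation V E r f S - f S = c / total_fitness V r S * (\<Sum>j\<in>{1..l}. block_drift r S \<alpha> \<beta> j)"
proof -
  interpret moran_chain V E r by (rule moran_chain_metafunnel[OF r])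
  have "next_expectation V E r f S - f S = (1 / total_fitness V r S) *
    (\<Sum>v\<in>V. (fitness r S v / real (card (out_nbrs E v))) * (\<Sum>w\<in>out_nbrs E v. c * layer_increment \<alpha> \<beta> (v \<in> S) (w \<in> S) (fst w)))"
    unfolding next_expectation_minus_eq by (intro arg_cong2[where f="(*)"] refl sum.cong) (auto simp: step)
  also have "\<dots> = c / total_fitness V r S * (\<Sum>v\<in>V. vertex_drift r S \<alpha> \<beta> v)"
    unfolding vertex_drift_def by (simp add: sum_distrib_left mult_ac)
  finally show ?thesis unfolding sum_vertex_drift .
qed

definition layer_weight :: "nat \<Rightarrow> real" where
  "layer_weight i = (if i = 0 then 1 else if i = k then real l * real m else 1 / real m ^ i)"

definition count_potential :: "(nat\<times>nat\<times>nat) set \<Rightarrow> real" where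
  "count_potential S = (\<Sum>v\<in>S. layer_weight (fst v))"

lemma layer_weight_pos: "layer_weight i > 0" using lpos mpos by (simp add: layer_weight_def)

lemma count_potential_step: "S \<subseteq> V \<Longrightarrow> count_potential (moran_step S v w) - count_potential S = 1 * layer_increment layer_weight (\<lambda>i. - layer_weight i) (v \<in> S) (w \<in> S) (fst w)"
proof -
  assume "S \<subseteq> V"
  then have fS: "finite S" using finite_V finite_subset by blast
  show ?thesis
  proof (cases "v \<in> S")
    case True
    then show ?thesis
      by (cases "w \<in> S") (simp_all add: moran_step_def count_potential_def layer_increment_def fS insert_absorb)
  next
    case False
    then show ?thesis
      by (cases "w \<in> S") (simp_all add: moran_step_def count_potential_def layer_increment_def fS sum_diff1)
  qed
qed

definition boundary_weight :: "(nat\<times>nat\<times>nat) set \<Rightarrow> nat \<Rightarrow> real" where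
  "boundary_weight S j = real m / real m ^ k * apex_ind S * (real m ^ k - block_count S k j) + block_count S 1 j * (1 - apex_ind S)
     + (\<Sum>i\<in>{1..<k}. block_count S (Suc i) j * (real m ^ i - block_count S i j) / real m ^ i / real m ^ i)"

text \<open>The count potential has drift r - 1 times the number of mutant/non-mutant edges (weighted
  by the inverse out-degrees), because in every branch the weighted number of edges leaving the
  mutants equals the weighted number of edges entering them.\<close>

lemma block_drift_count_potential:
  "block_drift r S layer_weight (\<lambda>i. - layer_weight i) j = (r - 1) * boundary_weight S j"
proof -
  define C_out where "C_out = (\<Sum>i\<in>{1..<k}. block_count S (Suc i) j * (real m ^ i - block_count S i j)
     / real m ^ i / real m ^ i)"
  define C_in where "C_in = (\<Sum>i\<in>{1..<k}. (real m ^ Suc i - block_count S (Suc i) j) * block_count S i j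
     / real m ^ i / real m ^ i)"
  define IC where "IC = real m / real m ^ k * (1 - apex_ind S) * block_count S k j
     + (real m - block_count S 1 j) * apex_ind S + C_in"
  have mk: "real m ^ k > 0" "real m > 0" using mpos by auto
  have chain: "(\<Sum>i\<in>{1..<k}. (1 / real m ^ i) * (r * block_count S (Suc i) j * (real m ^ i - block_count S i j)
        * layer_weight i + (real m ^ Suc i - block_count S (Suc i) j) * block_count S i j * - layer_weight i))
     = r * C_out - C_in"
    unfolding C_out_def C_in_def sum_distrib_left sum_subtractf[symmetric]
  proof (intro sum.cong refl)
    fix i assume "i \<in> {1..<k}"
    then have w: "layer_weight i = 1 / real m ^ i" by (simp add: layer_weight_def)
    show "1 / real m ^ i * (r * block_count S (Suc i) j * (real m ^ i - block_count S i j) * layer_weight i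
        + (real m ^ Suc i - block_count S (Suc i) j) * block_count S i j * - layer_weight i)
       = r * (block_count S (Suc i) j * (real m ^ i - block_count S i j) / real m ^ i / real m ^ i)
         - (real m ^ Suc i - block_count S (Suc i) j) * block_count S i j / real m ^ i / real m ^ i"
      unfolding w using mpos by (simp add: field_simps)
  qed
  have "layer_weight k = real l * real m" "layer_weight 0 = 1" using kpos by (auto simp: layer_weight_def)
  then have drift: "block_drift r S layer_weight (\<lambda>i. - layer_weight i) j = r * boundary_weight S j - IC"
    unfolding block_drift_def chain boundary_weight_def IC_def C_out_def[symmetric]
    using lpos mk by (simp add: field_simps)
  define z where "z i = block_count S i j * real m / real m ^ i" for i
  have "C_out - C_in = (\<Sum>i\<in>{1..<k}. z (Suc i) - z i)"
    unfolding C_out_def C_in_def sum_subtractf[symmetric] z_def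
    by (intro sum.cong refl) (use mk in \<open>simp add: power_Suc field_simps\<close>)
  also have "\<dots> = z k - z 1" using kpos by (intro sum_Suc_diff') simp
  finally have "C_out = C_in + z k - z 1" by simp
  then have "boundary_weight S j = IC"
    unfolding boundary_weight_def IC_def C_out_def[symmetric] z_def using mk by (simp add: field_simps)
  then show ?thesis using drift by (simp add: algebra_simps)
qed

lemma block_card_le: "block_card S i j \<le> m ^ i"
proof -
  have "card {x. x < m ^ i \<and> (i,j,x) \<in> S} \<le> card {..<m^i}" by (intro card_mono) auto
  then show ?thesis by (simp add: block_card_def)
qed

lemma block_card_full: "block_card S i j = m ^ i \<Longrightarrow> x < m ^ i \<Longrightarrow> (i,j,x) \<in> S"
proof -
  assume a: "block_card S i j = m ^ i" "x < m ^ i"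
  have "{x. x < m ^ i \<and> (i,j,x) \<in> S} = {..<m^i}"
    by (rule card_subset_eq) (use a in \<open>auto simp: block_card_def\<close>)
  then show ?thesis using a by auto
qed

lemma block_card_zero: "block_card S i j = 0 \<Longrightarrow> x < m ^ i \<Longrightarrow> (i,j,x) \<notin> S"
proof -
  assume a: "block_card S i j = 0" "x < m ^ i"
  have "finite {x. x < m ^ i \<and> (i,j,x) \<in> S}" by simp
  then have "{x. x < m ^ i \<and> (i,j,x) \<in> S} = {}" using a(1) by (simp add: block_card_def)
  then show ?thesis using a by auto
qed

lemma block_card_full_below:
  assumes top: "block_card S k j = m ^ k"
    and closed: "\<forall>i\<in>{1..<k}. block_card S (Suc i) j = 0 \<or> block_card S i j = m ^ i"
    and i: "1 \<le> i" "i \<le> k"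
  shows "block_card S i j = m ^ i"
  using i(2,1)
proof (induction rule: inc_induct)
  case (step n)
  then have "n \<in> {1..<k}" by simp
  with closed have "block_card S (Suc n) j = 0 \<or> block_card S n j = m ^ n" by blast
  moreover have "block_card S (Suc n) j \<noteq> 0" using step mpos by simp
  ultimately show ?case by blast
qed (use top in simp)

lemma block_card_empty_above:
  assumes bottom: "block_card S 1 j = 0"
    and closed: "\<forall>i\<in>{1..<k}. block_card S (Suc i) j = 0 \<or> block_card S i j = m ^ i"
    and i: "1 \<le> i" "i \<le> k"
  shows "block_card S i j = 0"
  using i
proof (induction rule: dec_induct)
  case (step n)
  then have "n \<in> {1..<k}" using i(2) by simp
  with closed have "block_card S (Suc n) j = 0 \<or> block_card S n j = m ^ n" by blast
  moreover have "block_card S n j \<noteq> m ^ n" using step mpos i(2) by simp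
  ultimately show ?case by blast
qed (use bottom in simp)

text \<open>A proper nonempty set of mutants has a boundary edge in some branch: otherwise the mutants
  would be closed under the edges of a branch, which forces S = V (apex mutant) or S = {}.\<close>

lemma boundary_edge_exists:
  assumes S: "S \<subseteq> V" "S \<noteq> {}" "S \<noteq> V"
  shows "\<exists>j\<in>{1..l}. (apex \<in> S \<and> block_card S k j < m ^ k) \<or> (apex \<notin> S \<and> block_card S 1 j \<ge> 1) \<or>
           (\<exists>i\<in>{1..<k}. block_card S (Suc i) j \<ge> 1 \<and> block_card S i j < m ^ i)"
proof (rule ccontr)
  assume "\<not> ?thesis"
  then have H: "\<And>j. j \<in> {1..l} \<Longrightarrow> (apex \<in> S \<longrightarrow> block_card S k j = m ^ k) \<and>
      (apex \<notin> S \<longrightarrow> block_card S 1 j = 0) \<and>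
      (\<forall>i\<in>{1..<k}. block_card S (Suc i) j = 0 \<or> block_card S i j = m ^ i)"
    using block_card_le by (metis le_neq_implies_less less_one not_le)
  show False
  proof (cases "apex \<in> S")
    case True
    have "v \<in> S" if "v \<in> V" for v
    proof -
      obtain a b c where abc: "v = (a,b,c)" by (cases v)
      show ?thesis
      proof (cases "a = 0")
        case True then show ?thesis using \<open>v \<in> V\<close> abc \<open>apex \<in> S\<close> by (auto simp: mem_V apex_def)
      next
        case False
        then have a: "1 \<le> a" "a \<le> k" "b \<in> {1..l}" "c < m ^ a" using \<open>v \<in> V\<close> abc by (auto simp: mem_V)
        then have "block_card S a b = m ^ a"
          by (intro block_card_full_below[of S b a]) (use H[of b] True in auto)
        then show ?thesis using block_card_full a abc by blast
      qed
    qed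
    then show False using S by auto
  next
    case False
    have "v \<notin> S" for v
    proof
      assume "v \<in> S"
      obtain a b c where abc: "v = (a,b,c)" by (cases v)
      have "v \<in> V" using \<open>v \<in> S\<close> S(1) by auto
      then have "a \<noteq> 0" using \<open>v \<in> S\<close> abc False by (auto simp: mem_V apex_def)
      then have a: "1 \<le> a" "a \<le> k" "b \<in> {1..l}" "c < m ^ a" using \<open>v \<in> S\<close> S(1) abc by (auto simp: mem_V)
      then have "block_card S a b = 0"
        by (intro block_card_empty_above[of S b a]) (use H[of b] False in auto)
      then show False using block_card_zero a abc \<open>v \<in> S\<close> by blast
    qed
    then show False using S by auto
  qed
qed

lemma apex_ind_cases: "apex_ind S = 0 \<or> apex_ind S = 1" by (simp add: apex_ind_def)

lemma boundary_weight_chain_term_nonneg: "i \<in> {1..<k} \<Longrightarrow> block_count S (Suc i) j * (real m ^ i - block_count S i j) / real m ^ i / real m ^ i \<ge> 0"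
  using block_count_le[of S i j] block_count_nonneg[of S "Suc i" j] by simp

lemma boundary_weight_nonneg: "boundary_weight S j \<ge> 0"
proof -
  have "real m / real m ^ k * apex_ind S * (real m ^ k - block_count S k j) \<ge> 0"
    using block_count_le[of S k j] apex_ind_cases[of S] by auto
  moreover have "block_count S 1 j * (1 - apex_ind S) \<ge> 0" using block_count_nonneg[of S 1 j] apex_ind_cases[of S] by auto
  moreover have "(\<Sum>i\<in>{1..<k}. block_count S (Suc i) j * (real m ^ i - block_count S i j) / real m ^ i / real m ^ i) \<ge> 0"
    by (intro sum_nonneg boundary_weight_chain_term_nonneg)
  ultimately show ?thesis unfolding boundary_weight_def by linarith
qed

lemma block_count_le_of_not_full:
  "block_card S i j < m ^ i \<Longrightarrow> block_count S i j \<le> real m ^ i - 1"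
  by (simp add: block_count_def flip: of_nat_power)

lemma boundary_weight_ge_of_boundary_edge:
  assumes cut: "(apex \<in> S \<and> block_card S k j < m ^ k) \<or> (apex \<notin> S \<and> block_card S 1 j \<ge> 1) \<or>
           (\<exists>i\<in>{1..<k}. block_card S (Suc i) j \<ge> 1 \<and> block_card S i j < m ^ i)"
  shows "boundary_weight S j \<ge> 1 / real m ^ (2*k)"
proof -
  have m1: "real m \<ge> 1" using mpos by simp
  have mk1: "real m ^ i \<ge> 1" for i using m1 by (simp add: one_le_power)
  have e_le: "1 / real m ^ (2*k) \<le> 1 / real m ^ i" if "i \<le> 2*k" for i
    using mk1[of i] that m1 by (intro divide_left_mono) (auto intro: power_increasing)
  have c3: "(\<Sum>i\<in>{1..<k}. block_count S (Suc i) j * (real m ^ i - block_count S i j) / real m ^ i / real m ^ i) \<ge> 0"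
    by (intro sum_nonneg boundary_weight_chain_term_nonneg)
  have t1: "real m / real m ^ k * apex_ind S * (real m ^ k - block_count S k j) \<ge> 0"
    using block_count_le[of S k j] apex_ind_cases[of S] by auto
  have t2: "block_count S 1 j * (1 - apex_ind S) \<ge> 0"
    using block_count_nonneg[of S 1 j] apex_ind_cases[of S] by auto
  consider (top) "apex \<in> S" "block_card S k j < m ^ k" | (bottom) "apex \<notin> S" "block_card S 1 j \<ge> 1"
    | (chain) i where "i \<in> {1..<k}" "block_card S (Suc i) j \<ge> 1" "block_card S i j < m ^ i"
    using cut by blast
  then show ?thesis
  proof cases
    case top
    have "real m * 1 \<le> real m * (real m ^ k - block_count S k j)"
      using block_count_le_of_not_full[OF top(2)] m1 by (intro mult_left_mono) auto
    then have "real m / real m ^ k \<le> real m * (real m ^ k - block_count S k j) / real m ^ k"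
      using mk1[of k] by (intro divide_right_mono) auto
    then have "real m / real m ^ k * apex_ind S * (real m ^ k - block_count S k j) \<ge> real m / real m ^ k"
      using top(1) by (simp add: apex_ind_def)
    moreover have "real m / real m ^ k \<ge> 1 / real m ^ k" using m1 by (simp add: divide_right_mono)
    moreover have "1 / real m ^ (2*k) \<le> 1 / real m ^ k" by (rule e_le) simp
    ultimately show ?thesis using c3 t2 unfolding boundary_weight_def by linarith
  next
    case bottom
    have "block_count S 1 j * (1 - apex_ind S) \<ge> 1"
      using bottom by (simp add: apex_ind_def block_count_def)
    moreover have "1 / real m ^ (2*k) \<le> 1" using mk1[of "2*k"] by (simp add: divide_le_eq)
    ultimately show ?thesis using c3 t1 unfolding boundary_weight_def by linarith
  next
    case chain
    have "block_count S (Suc i) j * (real m ^ i - block_count S i j) \<ge> 1 * 1"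
      using block_count_le_of_not_full[OF chain(3)] chain(2)
      by (intro mult_mono) (auto simp: block_count_def)
    then have ti: "block_count S (Suc i) j * (real m ^ i - block_count S i j) / real m ^ i / real m ^ i
        \<ge> 1 / real m ^ (2*i)"
      using mk1[of i] by (simp add: divide_right_mono power_mult power2_eq_square divide_divide_eq_left
              flip: mult_2 power_add)
    have "(\<Sum>i\<in>{1..<k}. block_count S (Suc i) j * (real m ^ i - block_count S i j) / real m ^ i / real m ^ i)
        \<ge> block_count S (Suc i) j * (real m ^ i - block_count S i j) / real m ^ i / real m ^ i"
      by (rule member_le_sum) (use chain boundary_weight_chain_term_nonneg in auto)
    moreover have "1 / real m ^ (2*k) \<le> 1 / real m ^ (2*i)" using chain by (intro e_le) auto
    ultimately show ?thesis using ti t1 t2 unfolding boundary_weight_def by linarith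
  qed
qed

lemma sum_boundary_weight_ge:
  assumes S: "S \<subseteq> V" "S \<noteq> {}" "S \<noteq> V"
  shows "(\<Sum>j\<in>{1..l}. boundary_weight S j) \<ge> 1 / real m ^ (2*k)"
proof -
  obtain j where j: "j \<in> {1..l}" and cut: "(apex \<in> S \<and> block_card S k j < m ^ k) \<or>
      (apex \<notin> S \<and> block_card S 1 j \<ge> 1) \<or>
      (\<exists>i\<in>{1..<k}. block_card S (Suc i) j \<ge> 1 \<and> block_card S i j < m ^ i)"
    using boundary_edge_exists[OF S] by blast
  have "1 / real m ^ (2*k) \<le> boundary_weight S j"
    by (rule boundary_weight_ge_of_boundary_edge[OF cut])
  also have "\<dots> \<le> (\<Sum>j\<in>{1..l}. boundary_weight S j)"
    by (rule member_le_sum) (use j boundary_weight_nonneg in auto)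
  finally show ?thesis .
qed

lemma not_self_loop: "x \<in> V \<Longrightarrow> x \<notin> out_nbrs E x"
  using kpos by (cases x) (auto simp: out_nbrs_def mem_E)

lemma in_weight_ge_1:
  assumes x: "x \<in> V" "fst x < k" shows "in_weight V E x \<ge> 1"
proof -
  interpret moran_chain V E 1 using moran_chain_metafunnel by simp
  have nn: "\<And>v. (if x \<in> out_nbrs E v then 1 / real (card (out_nbrs E v)) else 0) \<ge> 0" by simp
  obtain a b c where abc: "x = (a,b,c)" by (cases x) auto
  show ?thesis
  proof (cases "a = 0")
    case True
    then have xv: "x = apex" using x abc by (auto simp: mem_V apex_def)
    have v1: "(1,1,0) \<in> V" using kpos lpos mpos by (simp add: mem_V)
    have o: "out_nbrs E (1,1,0) = {apex}" using lpos mpos by (intro out_nbrs_layer_1) auto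
    have "1 \<le> (if x \<in> out_nbrs E (1,1,0) then 1 / real (card (out_nbrs E (1,1,0))) else 0)"
      using o xv by simp
    also have "\<dots> \<le> in_weight V E x" unfolding in_weight_def
      by (rule member_le_sum[OF v1]) (use finite_V in auto)
    finally show ?thesis .
  next
    case False
    then have a: "1 \<le> a" "a < k" "1 \<le> b" "b \<le> l" "c < m ^ a" using x abc by (auto simp: mem_V)
    have sub: "mf_block m (Suc a) b \<subseteq> V" using a by (auto simp: mf_block_def mem_V)
    have "(\<Sum>v\<in>mf_block m (Suc a) b. if x \<in> out_nbrs E v then 1 / real (card (out_nbrs E v)) else 0)
        = (\<Sum>v\<in>mf_block m (Suc a) b. 1 / real m ^ a)"
    proof (intro sum.cong refl)
      fix v assume v: "v \<in> mf_block m (Suc a) b"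
      then obtain y where y: "v = (Suc a, b, y)" "y < m ^ Suc a" by (auto simp: mf_block_def)
      have "out_nbrs E v = mf_block m a b" unfolding y(1) using a y by (intro out_nbrs_layer_Suc) auto
      then show "(if x \<in> out_nbrs E v then 1 / real (card (out_nbrs E v)) else 0) = 1 / real m ^ a"
        using abc a by (simp add: card_block)
    qed
    also have "\<dots> = real m" using mpos by (simp add: card_block)
    finally have eqm: "(\<Sum>v\<in>mf_block m (Suc a) b. if x \<in> out_nbrs E v then 1 / real (card (out_nbrs E v)) else 0) = real m" .
    moreover have "(\<Sum>v\<in>mf_block m (Suc a) b. if x \<in> out_nbrs E v then 1 / real (card (out_nbrs E v)) else 0)
       \<le> (\<Sum>v\<in>V. if x \<in> out_nbrs E v then 1 / real (card (out_nbrs E v)) else 0)"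
      by (rule sum_mono2[OF finite_V sub]) simp
    ultimately have "real m \<le> in_weight V E x" unfolding in_weight_def by simp
    then show ?thesis using mpos by linarith
  qed
qed

lemma card_V: "card V = 1 + l * (\<Sum>i\<in>{1..k}. m ^ i)"
proof -
  have "card V = (\<Sum>v\<in>V. 1::nat)" by simp
  also have "\<dots> = 1 + (\<Sum>i\<in>{1..k}. \<Sum>j\<in>{1..l}. \<Sum>x<m^i. 1::nat)" by (rule sum_V_blocks)
  also have "\<dots> = 1 + l * (\<Sum>i\<in>{1..k}. m ^ i)" by (simp add: sum_distrib_left)
  finally show ?thesis .
qed

lemma top_layer_subset: "mf_layer l m k \<subseteq> V" using kpos by (auto simp: mf_layer_def mf_block_def mem_V)

section \<open>Extinction probabilities on metafunnels\<close>

context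
  fixes r :: real
  assumes r1: "r > 1"
begin

text \<open>The product potential of a mutant set S is the product of aw i = 1/(1 + cw i) over its
  mutants in layer i. On a branch with mutant fractions x_i its drift consists of gains
  Gw i * x_i (1 - x_{i+1}) and losses Lw i * x_{i+1} (1 - x_i); the weights cw are chosen such that
  Gw grows geometrically and Lw i \<le> Gw (i+1), so the gains dominate by telescoping.\<close>

definition G0 :: real where "G0 = (2 * r ^ (k+1) - 1) / (real l * r ^ k)"
definition cw :: "nat \<Rightarrow> real" where
  "cw i = (if i = k then 2 * r ^ (k+1) - 1 else r ^ i * G0 / real m ^ Suc i)"
definition aw :: "nat \<Rightarrow> real" where "aw i = 1 / (1 + cw i)"
definition sw :: "nat \<Rightarrow> real" where "sw i = cw i / (1 + cw i)"
definition Gw :: "nat \<Rightarrow> real" where "Gw i = r ^ i * G0"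
definition Lw :: "nat \<Rightarrow> real" where
  "Lw i = (if i = k then r * sw k / real l else r * real m ^ Suc i * sw i)"
definition block_frac :: "(nat\<times>nat\<times>nat) set \<Rightarrow> nat \<Rightarrow> nat \<Rightarrow> real" where
  "block_frac S i j = block_count S i j / real m ^ i"

lemma one_le_r_pow: "r ^ i \<ge> 1" using r1 by (simp add: one_le_power)

lemma one_le_cw_top: "2 * r ^ (k+1) - 1 \<ge> 1" using one_le_r_pow[of "k+1"] by simp

lemma G0_pos: "G0 > 0"
  using one_le_cw_top lpos one_le_r_pow[of k] by (simp add: G0_def)

lemma cw_pos: "cw i > 0"
  using one_le_cw_top G0_pos mpos one_le_r_pow[of i] by (auto simp: cw_def)

lemma sw_le: "sw i \<le> cw i" and sw_nonneg: "sw i \<ge> 0"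
  using cw_pos[of i] by (auto simp: sw_def field_simps)

lemma aw_sw: "aw i - 1 = - sw i"
  using cw_pos[of i] by (simp add: aw_def sw_def field_simps)

lemma Gw_eq: "i < k \<Longrightarrow> Gw i = real m ^ Suc i * cw i" "Gw k = cw k / real l"
proof -
  have nz: "real m ^ Suc i \<noteq> 0" "r ^ k \<noteq> 0" "real l \<noteq> 0" using mpos lpos r1 by auto
  show "i < k \<Longrightarrow> Gw i = real m ^ Suc i * cw i" using nz by (simp add: Gw_def cw_def)
  show "Gw k = cw k / real l" using nz by (simp add: Gw_def cw_def G0_def)
qed

lemma Lw_le: "i < k \<Longrightarrow> Lw i \<le> Gw (Suc i)"
proof -
  assume i: "i < k"
  have "Lw i = r * (real m ^ Suc i * sw i)" using i by (simp add: Lw_def)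
  also have "\<dots> \<le> r * (real m ^ Suc i * cw i)" using sw_le[of i] r1 mpos by (intro mult_left_mono) auto
  also have "\<dots> = Gw (Suc i)" using Gw_eq(1)[OF i] by (simp add: Gw_def)
  finally show ?thesis .
qed

lemma Lw_top: "Lw k = G0 / 2"
proof -
  have "Lw k = r * ((2 * r ^ (k+1) - 1) / (2 * r ^ (k+1))) / real l"
    using one_le_cw_top by (simp add: Lw_def sw_def cw_def)
  also have "\<dots> = G0 / 2" using one_le_r_pow[of k] r1 lpos by (simp add: G0_def field_simps)
  finally show ?thesis .
qed

lemma Gw_mono: "i \<le> j \<Longrightarrow> Gw i \<le> Gw j"
  using G0_pos r1 by (simp add: Gw_def power_increasing)

lemma block_frac_bounds: "0 \<le> block_frac S i j" "block_frac S i j \<le> 1"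
  using block_count_le[of S i j] block_count_nonneg[of S i j] mpos by (auto simp: block_frac_def divide_le_eq)

lemma block_drift_product_potential: "block_drift r S (\<lambda>i. aw i - 1) cw j =
   ((1 - apex_ind S) * block_frac S k j * Gw k - apex_ind S * (1 - block_frac S k j) * Lw k)
   + (apex_ind S * (1 - block_frac S 1 j) * Gw 0 - (1 - apex_ind S) * block_frac S 1 j * Lw 0)
   + (\<Sum>i\<in>{1..<k}. Gw i * block_frac S i j * (1 - block_frac S (Suc i) j) - Lw i * block_frac S (Suc i) j * (1 - block_frac S i j))"
proof -
  have mk: "real m ^ i \<noteq> 0" for i using mpos by simp
  have top: "1 / (real l * real m ^ k) * (r * apex_ind S * (real m ^ k - block_count S k j) * (aw k - 1) + (1 - apex_ind S) * block_count S k j * cw k)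
     = (1 - apex_ind S) * block_frac S k j * Gw k - apex_ind S * (1 - block_frac S k j) * Lw k"
  proof -
    have Lk: "Lw k = r * sw k / real l" by (simp add: Lw_def)
    show ?thesis unfolding aw_sw block_frac_def Gw_eq(2) Lk using lpos mk[of k] by (simp add: field_simps)
  qed
  have bot: "r * block_count S 1 j * (1 - apex_ind S) * (aw 0 - 1) + (real m - block_count S 1 j) * apex_ind S * cw 0
     = apex_ind S * (1 - block_frac S 1 j) * Gw 0 - (1 - apex_ind S) * block_frac S 1 j * Lw 0"
  proof -
    have L0: "Lw 0 = r * real m * sw 0" "Gw 0 = real m * cw 0" using kpos by (simp_all add: Lw_def Gw_eq(1))
    show ?thesis unfolding aw_sw block_frac_def L0 power_one_right using mpos by (simp add: field_simps)
  qed
  have ch: "(\<Sum>i\<in>{1..<k}. 1 / real m ^ i * (r * block_count S (Suc i) j * (real m ^ i - block_count S i j) * (aw i - 1)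
        + (real m ^ Suc i - block_count S (Suc i) j) * block_count S i j * cw i))
     = (\<Sum>i\<in>{1..<k}. Gw i * block_frac S i j * (1 - block_frac S (Suc i) j) - Lw i * block_frac S (Suc i) j * (1 - block_frac S i j))"
  proof (intro sum.cong refl)
    fix i assume i: "i \<in> {1..<k}"
    then have ik: "i < k" "i \<noteq> k" by auto
    show "1 / real m ^ i * (r * block_count S (Suc i) j * (real m ^ i - block_count S i j) * (aw i - 1)
        + (real m ^ Suc i - block_count S (Suc i) j) * block_count S i j * cw i)
       = Gw i * block_frac S i j * (1 - block_frac S (Suc i) j) - Lw i * block_frac S (Suc i) j * (1 - block_frac S i j)"
    proof -
      have GL: "Gw i = real m * real m ^ i * cw i" "Lw i = r * (real m * real m ^ i) * sw i"
        using ik by (simp_all add: Gw_eq(1) Lw_def)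
      show ?thesis unfolding aw_sw block_frac_def GL power_Suc using mpos by (simp add: field_simps)
    qed
  qed
  show ?thesis unfolding block_drift_def top bot ch ..
qed

lemma block_drift_product_potential_ge: "block_drift r S (\<lambda>i. aw i - 1) cw j \<ge> (if apex_ind S = 1 \<and> 2 \<le> k \<and> block_frac S k j > 1 / (2 * r ^ k) then - Gw k else 0)"
proof -
  let ?x = "\<lambda>i. block_frac S i j"
  have ch: "(\<Sum>i\<in>{1..<k}. Gw i * ?x i * (1 - ?x (Suc i)) - Lw i * ?x (Suc i) * (1 - ?x i)) \<ge> Gw 1 * ?x 1 - Gw k * ?x k"
    using kpos by (intro telescoping_chain_ge) (auto simp: block_frac_bounds Lw_le Gw_mono)
  have x1: "0 \<le> ?x 1" "?x 1 \<le> 1" and xk: "0 \<le> ?x k" "?x k \<le> 1" by (simp_all add: block_frac_bounds)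
  have G01: "Gw 0 \<le> Gw 1" "Gw 1 \<le> Gw k" "0 \<le> Gw 0" using kpos G0_pos by (auto intro!: Gw_mono simp del: power_one_right) (simp add: Gw_def)
  have L0: "Lw 0 \<le> Gw 1" using Lw_le[of 0] kpos by simp
  have Lk: "Lw k = Gw 0 / 2" using Lw_top by (simp add: Gw_def)
  note b = block_drift_product_potential[of S j]
  consider (z) "apex_ind S = 0" | (one) "apex_ind S = 1" using apex_ind_cases by blast
  then show ?thesis
  proof cases
    case z
    have "(Gw 1 - Lw 0) * ?x 1 \<ge> 0" using L0 x1 by simp
    then show ?thesis using b ch z by (simp add: algebra_simps)
  next
    case one
    have base: "block_drift r S (\<lambda>i. aw i - 1) cw j \<ge> - (1 - ?x k) * Lw k + (1 - ?x 1) * Gw 0 + Gw 1 * ?x 1 - Gw k * ?x k"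
      using b ch one by (simp add: algebra_simps)
    show ?thesis
    proof (cases "k = 1")
      case True
      have "(1 - ?x 1) * (Gw 0 - Lw k) \<ge> 0" using x1 Lk G01 by simp
      then have "block_drift r S (\<lambda>i. aw i - 1) cw j \<ge> 0" using base True by (simp add: algebra_simps)
      then show ?thesis using True by simp
    next
      case False
      have a1: "(1 - ?x 1) * Gw 0 + Gw 1 * ?x 1 \<ge> Gw 0"
      proof -
        have "Gw 1 * ?x 1 \<ge> Gw 0 * ?x 1" using G01 x1 by (intro mult_right_mono) auto
        then show ?thesis by (simp add: algebra_simps)
      qed
      have a2: "(1 - ?x k) * Lw k \<le> Lw k" using xk Lk G01 by (simp add: mult_left_le_one_le)
      have main: "block_drift r S (\<lambda>i. aw i - 1) cw j \<ge> Gw 0 / 2 - Gw k * ?x k" using base a1 a2 Lk by linarith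
      show ?thesis
      proof (cases "?x k > 1 / (2 * r ^ k)")
        case True
        have "0 \<le> Gw k" using G01 by linarith
        then have "Gw k * ?x k \<le> Gw k" using xk by (simp add: mult_left_le)
        then show ?thesis using main True False kpos G01 one by auto
      next
        case nb: False
        have "Gw k * ?x k \<le> Gw k * (1 / (2 * r ^ k))" using nb G01 G0_pos by (intro mult_left_mono) (auto simp: Gw_def)
        also have "\<dots> = Gw 0 / 2" using r1 by (simp add: Gw_def)
        finally show ?thesis using main nb one by auto
      qed
    qed
  qed
qed

definition product_potential :: "(nat\<times>nat\<times>nat) set \<Rightarrow> real" where
  "product_potential S = (\<Prod>v\<in>S. aw (fst v))"

lemma aw_pos: "aw i > 0" and aw_le1: "aw i \<le> 1" and aw_lt1: "aw i < 1"
  using cw_pos[of i] by (auto simp: aw_def)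

lemma product_potential_nonneg: "product_potential S \<ge> 0" unfolding product_potential_def by (intro prod_nonneg) (simp add: aw_pos less_imp_le)

lemma product_potential_step:
  assumes "S \<subseteq> V" shows "product_potential (moran_step S v w) - product_potential S = product_potential S * layer_increment (\<lambda>i. aw i - 1) cw (v \<in> S) (w \<in> S) (fst w)"
proof -
  have fS: "finite S" using assms finite_V finite_subset by blast
  show ?thesis
  proof (cases "v \<in> S")
    case True
    then show ?thesis
      by (cases "w \<in> S") (simp_all add: moran_step_def product_potential_def layer_increment_def fS insert_absorb algebra_simps)
  next
    case False
    show ?thesis
    proof (cases "w \<in> S")
      case True
      have "product_potential S = aw (fst w) * product_potential (S - {w})" unfolding product_potential_def using fS True by (rule prod.remove)
      then have "product_potential (S - {w}) = product_potential S * (1 + cw (fst w))" using cw_pos[of "fst w"] by (simp add: aw_def field_simps)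
      then show ?thesis using False True by (simp add: moran_step_def layer_increment_def algebra_simps)
    next
      case False2: False
      then show ?thesis using False by (simp add: moran_step_def layer_increment_def)
    qed
  qed
qed

lemma next_expectation_minus_product_potential: "S \<subseteq> V \<Longrightarrow> next_expectation V E r product_potential S - product_potential S = product_potential S / total_fitness V r S * (\<Sum>j\<in>{1..l}. block_drift r S (\<lambda>i. aw i - 1) cw j)"
  using r1 by (intro next_expectation_minus_layer_increment) (auto simp: product_potential_step)

lemma next_expectation_minus_count_potential: "S \<subseteq> V \<Longrightarrow> next_expectation V E r count_potential S - count_potential S = (r - 1) / total_fitness V r S * (\<Sum>j\<in>{1..l}. boundary_weight S j)"
proof -
  assume S: "S \<subseteq> V"
  have "next_expectation V E r count_potential S - count_potential S = 1 / total_fitness V r S * (\<Sum>j\<in>{1..l}. block_drift r S layer_weight (\<lambda>i. - layer_weight i) j)"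
    using r1 S by (intro next_expectation_minus_layer_increment) (auto simp: count_potential_step)
  then show ?thesis by (simp add: block_drift_count_potential sum_distrib_left)
qed

text \<open>The drift of the product potential can only be negative when a top block is more than a
  1/(2 r^k) fraction mutant; the potential is then at most psib.\<close>

definition psib :: real where "psib = aw k powr (real m ^ k / (2 * r ^ k))"
definition eta :: real where "eta = (if 2 \<le> k then cw k * psib else 0)"

lemma psib_nonneg: "psib \<ge> 0" by (simp add: psib_def)

lemma eta_nonneg: "eta \<ge> 0"
  using psib_nonneg cw_pos[of k] by (simp add: eta_def)

lemma card_mutants_block: "card (S \<inter> mf_block m i j) = block_card S i j"
proof -
  have "S \<inter> mf_block m i j = (\<lambda>x. (i,j,x)) ` {x. x < m ^ i \<and> (i,j,x) \<in> S}" by (auto simp: mf_block_def)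
  then show ?thesis by (simp add: block_card_def card_image inj_on_def)
qed

lemma product_potential_le_block: "S \<subseteq> V \<Longrightarrow> product_potential S \<le> aw i ^ block_card S i j"
proof -
  assume "S \<subseteq> V"
  then have fS: "finite S" using finite_V finite_subset by blast
  let ?T = "S \<inter> mf_block m i j"
  have "product_potential S = (\<Prod>v\<in>S - ?T. aw (fst v)) * (\<Prod>v\<in>?T. aw (fst v))"
    unfolding product_potential_def using fS by (intro prod.subset_diff) auto
  also have "(\<Prod>v\<in>?T. aw (fst v)) = (\<Prod>v\<in>?T. aw i)" by (intro prod.cong) (auto simp: mf_block_def)
  also have "\<dots> = aw i ^ block_card S i j" by (simp add: card_mutants_block)
  also have "(\<Prod>v\<in>S - ?T. aw (fst v)) \<le> 1" by (intro prod_le_1) (auto simp: aw_le1 aw_pos less_imp_le)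
  finally show ?thesis using aw_pos[of i] by (simp add: mult_left_le_one_le)
qed

lemma product_potential_le_subset: "S \<subseteq> V \<Longrightarrow> T \<subseteq> S \<Longrightarrow> (\<And>v. v \<in> T \<Longrightarrow> fst v = i) \<Longrightarrow> product_potential S \<le> aw i ^ card T"
proof -
  assume S: "S \<subseteq> V" and T: "T \<subseteq> S" and Ti: "\<And>v. v \<in> T \<Longrightarrow> fst v = i"
  then have fS: "finite S" using finite_V finite_subset by blast
  have "product_potential S = (\<Prod>v\<in>S - T. aw (fst v)) * (\<Prod>v\<in>T. aw (fst v))"
    unfolding product_potential_def using fS T by (intro prod.subset_diff) auto
  also have "(\<Prod>v\<in>T. aw (fst v)) = (\<Prod>v\<in>T. aw i)" by (intro prod.cong) (auto simp: Ti)
  also have "\<dots> = aw i ^ card T" by simp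
  also have "(\<Prod>v\<in>S - T. aw (fst v)) \<le> 1" by (intro prod_le_1) (auto simp: aw_le1 aw_pos less_imp_le)
  finally show ?thesis using aw_pos[of i] by (simp add: mult_left_le_one_le)
qed

lemma product_potential_drift_ge: assumes S: "S \<subseteq> V" shows "product_potential S * (\<Sum>j\<in>{1..l}. block_drift r S (\<lambda>i. aw i - 1) cw j) \<ge> - eta"
proof (cases "\<exists>j\<in>{1..l}. apex_ind S = 1 \<and> 2 \<le> k \<and> block_frac S k j > 1 / (2 * r ^ k)")
  case False
  then have "block_drift r S (\<lambda>i. aw i - 1) cw j \<ge> 0" if "j \<in> {1..l}" for j using block_drift_product_potential_ge[of S j] that by auto
  then have "(\<Sum>j\<in>{1..l}. block_drift r S (\<lambda>i. aw i - 1) cw j) \<ge> 0" by (intro sum_nonneg) auto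
  moreover have "eta \<ge> 0" using eta_nonneg .
  ultimately show ?thesis using product_potential_nonneg[of S] by (smt (verit) mult_nonneg_nonneg)
next
  case True
  then obtain j0 where j0: "j0 \<in> {1..l}" "2 \<le> k" "block_frac S k j0 > 1 / (2 * r ^ k)" by blast
  have "(\<Sum>j\<in>{1..l}. block_drift r S (\<lambda>i. aw i - 1) cw j) \<ge> (\<Sum>j\<in>{1..l}. - Gw k)"
  proof (rule sum_mono)
    fix j assume "j \<in> {1..l}"
    have "Gw k \<ge> 0" using G0_pos r1 by (simp add: Gw_def)
    then show "- Gw k \<le> block_drift r S (\<lambda>i. aw i - 1) cw j" using block_drift_product_potential_ge[of S j] by (auto split: if_splits)
  qed
  also have "(\<Sum>j\<in>{1..l}. - Gw k) = - cw k" using lpos by (simp add: Gw_eq(2))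
  finally have F: "(\<Sum>j\<in>{1..l}. block_drift r S (\<lambda>i. aw i - 1) cw j) \<ge> - cw k" .
  have "real (block_card S k j0) > real m ^ k / (2 * r ^ k)"
    using j0(3) mpos by (simp add: block_frac_def block_count_def field_simps)
  then have "aw k ^ block_card S k j0 \<le> psib"
    unfolding psib_def using aw_pos[of k] aw_lt1[of k]
    by (subst powr_realpow[symmetric]) (auto intro: powr_mono')
  then have ps: "product_potential S \<le> psib" using product_potential_le_block[OF S, of k j0] by linarith
  have "product_potential S * (\<Sum>j\<in>{1..l}. block_drift r S (\<lambda>i. aw i - 1) cw j) \<ge> product_potential S * (- cw k)"
    using F product_potential_nonneg[of S] by (intro mult_left_mono) auto
  moreover have "product_potential S * cw k \<le> psib * cw k" using ps cw_pos[of k] by (intro mult_right_mono) auto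
  ultimately show ?thesis using j0 by (simp add: eta_def algebra_simps)
qed

lemma total_fitness_le: "total_fitness V r S \<le> r * real (card V)"
proof -
  have "total_fitness V r S \<le> (\<Sum>v\<in>V. r)" unfolding total_fitness_def
    by (intro sum_mono) (use r1 in \<open>simp add: fitness_def\<close>)
  then show ?thesis by (simp add: mult.commute)
qed

lemma count_potential_nonneg: "count_potential S \<ge> 0" unfolding count_potential_def by (intro sum_nonneg) (simp add: layer_weight_pos less_imp_le)

lemma count_potential_drift_ge:
  assumes S: "S \<subseteq> V" "S \<noteq> {}" "S \<noteq> V"
  shows "next_expectation V E r count_potential S - count_potential S \<ge> (r - 1) / (total_fitness V r S * real m ^ (2*k))"
proof -
  interpret moran_chain V E r using moran_chain_metafunnel r1 by simp
  have "(r - 1) / total_fitness V r S * (1 / real m ^ (2*k)) \<le> (r - 1) / total_fitness V r S * (\<Sum>j\<in>{1..l}. boundary_weight S j)"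
    using sum_boundary_weight_ge[OF S] total_fitness_pos[of S] r1 by (intro mult_left_mono) auto
  then show ?thesis using next_expectation_minus_count_potential[OF S(1)] by simp
qed

lemma count_potential_drift_ge_uniform:
  assumes S: "S \<subseteq> V" "S \<noteq> {}" "S \<noteq> V"
  shows "(r - 1) / (real m ^ (2*k) * (r * real (card V)))
    \<le> next_expectation V E r count_potential S - count_potential S"
proof -
  interpret moran_chain V E r using moran_chain_metafunnel r1 by simp
  have "(r - 1) / (real m ^ (2*k) * (r * real (card V))) \<le> (r - 1) / (total_fitness V r S * real m ^ (2*k))"
    using total_fitness_pos[of S] total_fitness_le[of S] r1 mpos card_V_pos
    by (intro divide_left_mono mult_pos_pos mult_left_mono) (auto simp: mult.commute)
  then show ?thesis using count_potential_drift_ge[OF S] by linarith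
qed

lemma extinction_prob_top_layer_ge:
  assumes u: "u \<in> V" "fst u = k"
  shows "extinction_prob V E r {u} \<ge> aw k - product_potential V - (2 * eta * real m ^ (2*k) / (r - 1)) * count_potential V"
proof (rule ge_of_ge_perturbation[OF _ count_potential_nonneg])
  interpret moran_chain V E r using moran_chain_metafunnel r1 by simp
  fix e :: real assume e: "e > 0"
  define B where "B = 2 * eta * real m ^ (2*k) / (r - 1)"
  have B: "B \<ge> 0" using eta_nonneg r1 by (simp add: B_def)
  define \<gamma> where "\<gamma> = e * ((r - 1) / (real m ^ (2*k) * (r * real (card V))))"
  have g: "\<gamma> > 0" using e r1 mpos card_V_pos by (simp add: \<gamma>_def)
  have "extinction_prob V E r {u} \<ge>
      product_potential {u} - product_potential V - (B + e) * (count_potential V - count_potential {u})"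
  proof (rule extinction_prob_ge_combined_potential[OF _ _ _ _ _ g])
    show "product_potential {} = 1" by (simp add: product_potential_def)
    show "product_potential V \<ge> 0" by (rule product_potential_nonneg)
    show "count_potential {} = 0" by (simp add: count_potential_def)
    show "count_potential V \<ge> 0" by (rule count_potential_nonneg)
    show "B + e \<ge> 0" using B e by simp
    show "{u} \<subseteq> V" "{u} \<noteq> {}" using u by auto
    fix S assume S: "S \<subseteq> V" "S \<noteq> {}" "S \<noteq> V"
    let ?TF = "total_fitness V r S"
    have TF: "?TF > 0" using total_fitness_pos by auto
    have "- eta / ?TF \<le> product_potential S * (\<Sum>j\<in>{1..l}. block_drift r S (\<lambda>i. aw i - 1) cw j) / ?TF"
      using product_potential_drift_ge[OF S(1)] TF by (intro divide_right_mono) auto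
    then have d1: "- eta / ?TF \<le> next_expectation V E r product_potential S - product_potential S"
      using next_expectation_minus_product_potential[OF S(1)] by simp
    have "2 * eta / ?TF = B * ((r - 1) / (?TF * real m ^ (2*k)))"
      using r1 mpos TF by (simp add: B_def field_simps)
    also have "\<dots> \<le> B * (next_expectation V E r count_potential S - count_potential S)"
      using count_potential_drift_ge[OF S] B by (intro mult_left_mono) auto
    finally have d2: "2 * eta / ?TF \<le> B * (next_expectation V E r count_potential S - count_potential S)" .
    have d3: "\<gamma> \<le> e * (next_expectation V E r count_potential S - count_potential S)"
      unfolding \<gamma>_def using count_potential_drift_ge_uniform[OF S] e by (intro mult_left_mono) auto
    have "eta / ?TF \<ge> 0" using eta_nonneg TF by simp
    then show "next_expectation V E r product_potential S + (B + e) * next_expectation V E r count_potential S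
        \<ge> product_potential S + (B + e) * count_potential S + \<gamma>"
      using d1 d2 d3 by (simp add: algebra_simps)
  qed
  moreover have "product_potential {u} = aw k" using u by (simp add: product_potential_def)
  moreover have "(B + e) * (count_potential V - count_potential {u}) \<le> (B + e) * count_potential V"
    using B e count_potential_nonneg[of "{u}"] by (intro mult_left_mono) auto
  ultimately show "extinction_prob V E r {u} \<ge> aw k - product_potential V - (B + e) * count_potential V"
    by linarith
qed

lemma V_neq_singleton: "V \<noteq> {x}"
proof -
  have "(k,1,0) \<in> V" using kpos lpos mpos by (simp add: mem_V)
  moreover have "(k,1,0) \<noteq> apex" using kpos by (simp add: apex_def)
  ultimately show ?thesis using apex_in_V by auto
qed

lemma extinction_prob_ge_of_in_weight:
  assumes x: "x \<in> V" "x \<notin> out_nbrs E x" and D: "in_weight V E x \<ge> 1"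
  shows "extinction_prob V E r {x} \<ge> 1 / (1 + r)"
proof (rule ge_of_ge_perturbation[where c=0, OF _ count_potential_nonneg, simplified])
  interpret moran_chain V E r using moran_chain_metafunnel r1 by simp
  fix e :: real assume e: "e > 0"
  define p where "p = 1 / (1 + r)"
  define \<psi> where "\<psi> S = (if S = {} then 1 else if S = {x} then p else 0)" for S :: "(nat\<times>nat\<times>nat) set"
  define \<gamma> where "\<gamma> = e * ((r - 1) / (real m ^ (2*k) * (r * real (card V))))"
  have g: "\<gamma> > 0" using e r1 mpos card_V_pos by (simp add: \<gamma>_def)
  have p: "0 \<le> p" "p * (in_weight V E x + r) \<le> in_weight V E x"
  proof -
    show "0 \<le> p" using r1 by (simp add: p_def)
    have "in_weight V E x + r \<le> in_weight V E x * (1 + r)" using D r1 by (simp add: algebra_simps)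
    then show "p * (in_weight V E x + r) \<le> in_weight V E x" using r1 by (simp add: p_def field_simps)
  qed
  have "extinction_prob V E r {x} \<ge> \<psi> {x} - \<psi> V - e * (count_potential V - count_potential {x})"
  proof (rule extinction_prob_ge_combined_potential[OF _ _ _ _ _ g])
    show "\<psi> {} = 1" by (simp add: \<psi>_def)
    show "\<psi> V \<ge> 0" using r1 by (simp add: \<psi>_def p_def)
    show "count_potential {} = 0" by (simp add: count_potential_def)
    show "count_potential V \<ge> 0" by (rule count_potential_nonneg)
    show "e \<ge> 0" using e by simp
    show "{x} \<subseteq> V" "{x} \<noteq> {}" using x by auto
    fix S assume S: "S \<subseteq> V" "S \<noteq> {}" "S \<noteq> V"
    have d1: "next_expectation V E r \<psi> S \<ge> \<psi> S"
    proof (cases "S = {x}")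
      case True
      have "next_expectation V E r \<psi> {x} \<ge> p"
        unfolding \<psi>_def by (rule next_expectation_single_mutant_ge[OF x p])
      then show ?thesis using True by (simp add: \<psi>_def)
    next
      case False
      have "next_expectation V E r \<psi> S \<ge> 0"
        by (rule next_expectation_nonneg[OF S(1)]) (use r1 in \<open>simp add: \<psi>_def p_def\<close>)
      then show ?thesis using False S(2) by (simp add: \<psi>_def)
    qed
    have "\<gamma> \<le> e * (next_expectation V E r count_potential S - count_potential S)"
      unfolding \<gamma>_def using count_potential_drift_ge_uniform[OF S] e by (intro mult_left_mono) auto
    then show "next_expectation V E r \<psi> S + e * next_expectation V E r count_potential S
        \<ge> \<psi> S + e * count_potential S + \<gamma>"
      using d1 by (simp add: algebra_simps)
  qed
  moreover have "\<psi> {x} = p" "\<psi> V = 0" using V_neq_singleton[of x] apex_in_V by (auto simp: \<psi>_def)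
  moreover have "e * (count_potential V - count_potential {x}) \<le> e * count_potential V"
    using e count_potential_nonneg[of "{x}"] by (intro mult_left_mono) auto
  ultimately show "extinction_prob V E r {x} \<ge> 1 / (1 + r) - e * count_potential V" by (simp add: p_def)
qed

end

lemma mean_extinction_metafunnel:
  "mean_extinction r (metafunnel k l m) = (\<Sum>v\<in>V. extinction_prob V E r {v}) / real (card V)"
  by (simp add: mean_extinction_def V_def E_def)

lemma extinction_prob_ge_below_top:
  assumes v: "v \<in> V" "v \<notin> mf_layer l m k"
  shows "1 / 3 \<le> extinction_prob V E 2 {v}"
proof -
  obtain a b c where abc: "v = (a, b, c)" by (cases v)
  have "fst v < k" using v kpos unfolding abc by (cases "a = k") (auto simp: mem_V)
  then show ?thesis
    using extinction_prob_ge_of_in_weight[of 2 v] not_self_loop[OF v(1)] in_weight_ge_1[OF v(1)] v by simp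
qed

lemma card_V_le_below_top:
  assumes k2: "2 \<le> k"
  shows "card V \<le> (m + 1) * card (V - mf_layer l m k)"
proof -
  let ?L = "V - mf_layer l m k"
  have "mf_layer l m (k - 1) \<subseteq> ?L" using k2 by (auto simp: mf_layer_def mf_block_def mem_V)
  then have "l * m ^ (k - 1) \<le> card ?L" using card_mono[OF finite_Diff[OF finite_V]] card_layer by metis
  then have "m * (l * m ^ (k - 1)) \<le> m * card ?L" by (rule mult_le_mono2)
  moreover have "l * m ^ k = m * (l * m ^ (k - 1))" using k2 by (cases k) auto
  ultimately have "l * m ^ k \<le> m * card ?L" by (simp only:)
  moreover have "card V = card ?L + l * m ^ k"
  proof -
    have "card ?L = card V - card (mf_layer l m k)"
      by (rule card_Diff_subset[OF finite_layer top_layer_subset])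
    moreover have "card (mf_layer l m k) \<le> card V" by (rule card_mono[OF finite_V top_layer_subset])
    ultimately show ?thesis using card_layer[of k] by linarith
  qed
  ultimately show ?thesis by simp
qed

lemma mean_extinction_ge_lower_layers:
  assumes k2: "2 \<le> k"
  shows "mean_extinction 2 (metafunnel k l m) \<ge> 1 / (3 * (real m + 1))"
proof -
  interpret moran_chain V E 2 using moran_chain_metafunnel by simp
  let ?L = "V - mf_layer l m k"
  have "real (card ?L) / 3 = (\<Sum>v\<in>?L. 1/3)" by simp
  also have "\<dots> \<le> (\<Sum>v\<in>?L. extinction_prob V E 2 {v})"
    by (rule sum_mono, rule extinction_prob_ge_below_top) auto
  also have "\<dots> \<le> (\<Sum>v\<in>V. extinction_prob V E 2 {v})"
    by (rule sum_mono2[OF finite_V]) (auto intro: extinction_prob_nonneg)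
  finally have sum: "real (card ?L) / 3 \<le> (\<Sum>v\<in>V. extinction_prob V E 2 {v})" .
  have "real (card V) \<le> real ((m + 1) * card ?L)"
    using card_V_le_below_top[OF k2] by (simp only: of_nat_le_iff)
  then have "real (card V) \<le> (real m + 1) * real (card ?L)" by (simp add: distrib_right)
  then have "1 / (3 * (real m + 1)) * real (card V) \<le> 1 / (3 * (real m + 1)) * ((real m + 1) * real (card ?L))"
    by (intro mult_left_mono) auto
  also have "\<dots> = real (card ?L) / 3"
    by (simp add: field_simps add_nonneg_eq_0_iff)
  finally have "1 / (3 * (real m + 1)) \<le> real (card ?L) / 3 / real (card V)"
    using card_V_pos by (subst pos_le_divide_eq) auto
  also have "\<dots> \<le> (\<Sum>v\<in>V. extinction_prob V E 2 {v}) / real (card V)"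
    using sum card_V_pos by (intro divide_right_mono) auto
  finally show ?thesis by (simp add: mean_extinction_metafunnel)
qed

lemma mean_extinction_ge_top_layer:
  assumes T: "\<And>u. u \<in> V \<Longrightarrow> fst u = k \<Longrightarrow> extinction_prob V E 2 {u} \<ge> T"
  shows "mean_extinction 2 (metafunnel k l m) \<ge> real l * real m ^ k * T / real (card V)"
proof -
  interpret moran_chain V E 2 using moran_chain_metafunnel by simp
  let ?T = "mf_layer l m k"
  have "(\<Sum>v\<in>V. extinction_prob V E 2 {v}) \<ge> (\<Sum>v\<in>?T. extinction_prob V E 2 {v})"
    by (rule sum_mono2[OF finite_V top_layer_subset]) (auto intro: extinction_prob_nonneg)
  moreover have "(\<Sum>v\<in>?T. extinction_prob V E 2 {v}) \<ge> (\<Sum>v\<in>?T. T)"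
  proof (rule sum_mono)
    fix v assume v: "v \<in> ?T"
    then have "fst v = k" by (cases v) simp
    then show "T \<le> extinction_prob V E 2 {v}" by (rule T[rotated]) (use v top_layer_subset in blast)
  qed
  moreover have "(\<Sum>v\<in>?T. T) = real l * real m ^ k * T" by (simp add: card_layer)
  ultimately show ?thesis unfolding mean_extinction_metafunnel using card_V_pos by (intro divide_right_mono) auto
qed

lemma aw_top_2: "aw 2 k = 1 / 2 ^ (k+2)" by (simp add: aw_def cw_def)

lemma product_potential_V_le: "product_potential 2 V \<le> (1 / 2 ^ (k+2)) ^ (l * m ^ k)"
  using product_potential_le_subset[of 2 V "mf_layer l m k" k] top_layer_subset card_layer aw_top_2
  by (auto simp: mf_layer_def)

lemma layer_weight_le: "layer_weight i \<le> real l * real m"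
proof -
  have "(1::real) \<le> real l" "1 \<le> real m" using lpos mpos by simp_all
  then have "1 \<le> real l * real m" using mult_mono[of 1 "real l" 1 "real m"] by simp
  moreover have "1 / real m ^ i \<le> 1" using mpos by (simp add: divide_le_eq one_le_power)
  ultimately show ?thesis by (auto simp: layer_weight_def)
qed

lemma count_potential_V_le: "count_potential V \<le> real (card V) * (real l * real m)"
proof -
  have "count_potential V \<le> (\<Sum>v\<in>V. real l * real m)" unfolding count_potential_def by (intro sum_mono layer_weight_le)
  then show ?thesis by simp
qed

lemma card_V_ge: "l * m ^ k + 1 \<le> card V" "l * m \<le> card V" "m ^ k \<le> card V" "l * k + 1 \<le> card V"
proof -
  have s1: "m ^ k \<le> (\<Sum>i\<in>{1..k}. m ^ i)" using kpos by (intro member_le_sum) auto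
  have "m ^ 1 \<le> (\<Sum>i\<in>{1..k}. m ^ i)" using kpos by (intro member_le_sum) auto
  then have s2: "m \<le> (\<Sum>i\<in>{1..k}. m ^ i)" by simp
  have s3: "k \<le> (\<Sum>i\<in>{1..k}. m ^ i)"
  proof -
    have "(\<Sum>i\<in>{1..k}. 1) \<le> (\<Sum>i\<in>{1..k}. m ^ i)" using mpos by (intro sum_mono) simp
    then show ?thesis by simp
  qed
  show "l * m ^ k + 1 \<le> card V" using s1 card_V by simp
  have "l * m \<le> l * (\<Sum>i\<in>{1..k}. m ^ i)" by (rule mult_le_mono2[OF s2])
  then show "l * m \<le> card V" unfolding card_V by linarith
  have "m ^ k \<le> l * m ^ k" using lpos by simp
  then show "m ^ k \<le> card V" using s1 card_V \<open>l * m ^ k + 1 \<le> card V\<close> by linarith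
  show "l * k + 1 \<le> card V" using s3 card_V by simp
qed

lemma card_V_le: "2 \<le> m \<Longrightarrow> card V \<le> 3 * (l * m ^ k)"
proof -
  assume m2: "2 \<le> m"
  have g: "(\<Sum>i\<in>{1..j}. m ^ i) \<le> 2 * m ^ j" for j
  proof (induction j)
    case 0 then show ?case by simp
  next
    case (Suc j)
    have "(\<Sum>i\<in>{1..Suc j}. m ^ i) = (\<Sum>i\<in>{1..j}. m ^ i) + m ^ Suc j" by simp
    also have "\<dots> \<le> 2 * m ^ j + m ^ Suc j" using Suc by simp
    also have "2 * m ^ j \<le> m ^ Suc j" using m2 by simp
    finally show ?case by simp
  qed
  have "card V \<le> 1 + l * (2 * m ^ k)" using card_V g[of k] by simp
  moreover have "1 \<le> l * m ^ k" using lpos mpos by (simp add: Suc_le_eq)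
  ultimately show ?thesis by linarith
qed

definition top_extinction_bound :: real where
  "top_extinction_bound = aw 2 k - product_potential 2 V - 2 * eta 2 * real m ^ (2*k) * count_potential V"

lemma extinction_prob_ge_top_extinction_bound:
  "u \<in> V \<Longrightarrow> fst u = k \<Longrightarrow> top_extinction_bound \<le> extinction_prob V E 2 {u}"
  using extinction_prob_top_layer_ge[of 2 u] by (simp add: top_extinction_bound_def)

lemma mean_extinction_ge_top_extinction_bound:
  "real l * real m ^ k * top_extinction_bound / real (card V) \<le> mean_extinction 2 (metafunnel k l m)"
  by (rule mean_extinction_ge_top_layer[OF extinction_prob_ge_top_extinction_bound])

lemma mean_extinction_ge_single_layer:
  assumes k1: "k = 1" and n3: "card V \<ge> 3"
  shows "mean_extinction 2 (metafunnel k l m) \<ge> 7 / 128"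
proof -
  have cV: "card V = 1 + l * m" using card_V k1 by simp
  then have lm: "2 \<le> l * m" using n3 by simp
  then have lm2: "2 \<le> real (l * m)" by linarith
  have "product_potential 2 V \<le> (1/8) ^ (l * m)" using product_potential_V_le k1 by simp
  also have "\<dots> \<le> (1/8) ^ 2" using lm by (intro power_decreasing) auto
  moreover have "eta 2 = (if 2 \<le> k then cw 2 k * psib 2 else 0)" by (simp add: eta_def)
  then have "top_extinction_bound = aw 2 k - product_potential 2 V"
    unfolding top_extinction_bound_def using k1 by simp
  moreover have "aw 2 k = 1/8" using aw_top_2 k1 by simp
  ultimately have "7/64 \<le> top_extinction_bound" by (simp add: power2_eq_square)
  then have "real (l * m) * (7/64) \<le> real (l * m) * top_extinction_bound"
    by (intro mult_left_mono) auto
  moreover have "7 / 128 * (1 + real (l * m)) \<le> real (l * m) * (7/64)" using lm2 by simp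
  ultimately have "7 / 128 \<le> real (l * m) * top_extinction_bound / (1 + real (l * m))"
    by (simp add: le_divide_eq)
  also have "\<dots> \<le> mean_extinction 2 (metafunnel k l m)"
    using mean_extinction_ge_top_extinction_bound cV k1 by simp
  finally show ?thesis .
qed

lemma product_potential_V_le_wide:
  assumes k2: "2 \<le> k" and m2: "2 \<le> m"
  shows "product_potential 2 V \<le> 1 / 2 ^ (k+2) / 4"
proof -
  define a :: real where "a = 1 / 2 ^ (k+2)"
  have "(16::real) \<le> 2 ^ (k+2)" using k2 power_increasing[of 4 "k+2" "2::real"] by simp
  then have a: "0 < a" "a \<le> 1/16" by (simp_all add: a_def field_simps)
  have "m \<le> m ^ k" using k2 m2 power_increasing[of 1 k m] by simp
  moreover have "m ^ k \<le> l * m ^ k" using lpos by simp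
  ultimately have "2 \<le> l * m ^ k" using m2 by linarith
  have "product_potential 2 V \<le> a ^ (l * m ^ k)" using product_potential_V_le by (simp add: a_def)
  also have "\<dots> \<le> a ^ 2" using \<open>2 \<le> l * m ^ k\<close> a by (intro power_decreasing) auto
  also have "\<dots> \<le> a / 4" using a by (simp add: power2_eq_square)
  finally show ?thesis by (simp only: a_def)
qed

lemma eta_le_wide:
  assumes k2: "2 \<le> k" and m2: "2 \<le> m"
    and H: "4 * ln (real (card V)) + (2 * real k + 7) * ln 2 \<le> real m / 4 * (real k + 2) * ln 2"
  shows "eta 2 \<le> 2 ^ (k+2) / (real (card V) ^ 4 * 2 ^ (2*k+7))"
proof -
  define a :: real where "a = 1 / 2 ^ (k+2)"
  define n where "n = real (card V)"
  have n: "1 \<le> n" using card_V_pos by (simp add: n_def)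
  have "1 \<le> (2::real) ^ (k+2)" by (rule one_le_power) simp
  then have a: "0 \<le> a" "a \<le> 1" by (simp_all add: a_def)
  have "(real m / 2) ^ 1 \<le> (real m / 2) ^ k" using m2 k2 by (intro power_increasing) auto
  then have "real m / 4 \<le> real m ^ k / (2 * 2 ^ k)" by (simp add: power_divide field_simps)
  then have "a powr (real m ^ k / (2 * 2 ^ k)) \<le> a powr (real m / 4)"
    using a by (intro powr_mono') auto
  also have "\<dots> = exp (- (real m / 4 * (real k + 2) * ln 2))"
  proof -
    have "ln a = ln 1 - ln ((2::real) ^ (k+2))" unfolding a_def by (rule ln_divide_pos) auto
    then have "ln a = - (real (k+2) * ln 2)" by (simp only: ln_realpow) simp
    then show ?thesis using a(1) \<open>1 \<le> (2::real) ^ (k+2)\<close> by (simp add: powr_def a_def)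
  qed
  also have "\<dots> \<le> exp (- (4 * ln n + (2 * real k + 7) * ln 2))" using H by (simp add: n_def)
  also have "\<dots> = 1 / (exp (real 4 * ln n) * exp (real (2*k+7) * ln 2))"
    by (simp add: exp_diff exp_minus inverse_eq_divide)
  also have "\<dots> = 1 / (n ^ 4 * 2 ^ (2*k+7))"
    using n by (simp only: exp_of_nat_mult exp_ln)
  finally have P: "a powr (real m ^ k / (2 * 2 ^ k)) \<le> 1 / (n ^ 4 * 2 ^ (2*k+7))" .
  have "eta 2 = cw 2 k * psib 2" using k2 by (simp add: eta_def)
  also have "\<dots> = (2 ^ (k+2) - 1) * a powr (real m ^ k / (2 * 2 ^ k))"
    by (simp add: cw_def psib_def aw_top_2 a_def)
  also have "\<dots> \<le> 2 ^ (k+2) * a powr (real m ^ k / (2 * 2 ^ k))"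
    by (intro mult_right_mono) auto
  also have "\<dots> \<le> 2 ^ (k+2) * (1 / (n ^ 4 * 2 ^ (2*k+7)))"
    using P by (intro mult_left_mono) auto
  finally show ?thesis by (simp add: n_def)
qed

lemma top_extinction_bound_ge_wide:
  assumes k2: "2 \<le> k" and m2: "2 \<le> m"
    and H: "4 * ln (real (card V)) + (2 * real k + 7) * ln 2 \<le> real m / 4 * (real k + 2) * ln 2"
  shows "1 / 2 ^ (k+2) / 2 \<le> top_extinction_bound"
proof -
  define n where "n = real (card V)"
  have n: "1 \<le> n" using card_V_pos by (simp add: n_def)
  have "real m ^ (2*k) \<le> n ^ 2"
    using card_V_ge(3) power_mono[of "real m ^ k" n 2] by (simp add: n_def power_mult mult.commute)
  moreover have "count_potential V \<le> n * n"
  proof -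
    have "real l * real m \<le> n" using card_V_ge(2) by (simp add: n_def flip: of_nat_mult)
    then have "n * (real l * real m) \<le> n * n" using n by (intro mult_left_mono) auto
    then show ?thesis using count_potential_V_le by (simp add: n_def)
  qed
  ultimately have "2 * eta 2 * real m ^ (2*k) * count_potential V
      \<le> 2 * (2 ^ (k+2) / (n ^ 4 * 2 ^ (2*k+7))) * n ^ 2 * (n * n)"
    using eta_le_wide[OF assms] eta_nonneg count_potential_nonneg[of 2 V]
    by (intro mult_mono) (auto simp: n_def)
  also have "\<dots> = 1 / 2 ^ (k+2) / 4"
  proof -
    have "2*k+7 = 3 + (k+2) + (k+2)" by simp
    then have "(2::real) ^ (2*k+7) = 2 ^ 3 * 2 ^ (k+2) * 2 ^ (k+2)" by (simp only: power_add)
    then show ?thesis using n by (simp add: field_simps power2_eq_square power4_eq_xxxx)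
  qed
  finally show ?thesis
    using product_potential_V_le_wide[OF k2 m2] by (simp add: top_extinction_bound_def aw_top_2)
qed

lemma mean_extinction_ge_wide:
  assumes k2: "2 \<le> k" and m2: "2 \<le> m"
    and H: "4 * ln (real (card V)) + (2 * real k + 7) * ln 2 \<le> real m / 4 * (real k + 2) * ln 2"
  shows "1 / (6 * 2 ^ (k+2)) \<le> mean_extinction 2 (metafunnel k l m)"
proof -
  have T: "1 / 2 ^ (k+2) / 2 \<le> top_extinction_bound" by (rule top_extinction_bound_ge_wide[OF assms])
  have "real (card V) \<le> 3 * (real l * real m ^ k)"
    using card_V_le[OF m2] by (simp flip: of_nat_mult of_nat_power)
  then have "1 / (6 * 2 ^ (k+2)) * real (card V) \<le> 1 / (6 * 2 ^ (k+2)) * (3 * (real l * real m ^ k))"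
    by (intro mult_left_mono) auto
  also have "\<dots> = 1 / 2 ^ (k+2) / 2 * (real l * real m ^ k)" by simp
  also have "\<dots> \<le> top_extinction_bound * (real l * real m ^ k)"
    using T lpos mpos by (intro mult_right_mono) auto
  finally have "1 / (6 * 2 ^ (k+2)) \<le> real l * real m ^ k * top_extinction_bound / real (card V)"
    using card_V_pos by (simp add: le_divide_eq mult.commute mult.left_commute)
  also have "\<dots> \<le> mean_extinction 2 (metafunnel k l m)"
    by (rule mean_extinction_ge_top_extinction_bound)
  finally show ?thesis .
qed

end

section \<open>Asymptotics\<close>

lemma ln_2_ge_half: "ln (2::real) \<ge> 1/2"
proof -
  have "exp (1::real) \<le> 4" using exp_le by simp
  then have "1 \<le> ln (4::real)" by (subst ln_ge_iff) auto
  moreover have "ln (4::real) = 2 * ln 2"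
    using ln_realpow[of 2 2] by simp
  ultimately show ?thesis by simp
qed

lemma two_pow_le_exp: "(2::real) ^ n \<le> exp (real n)"
proof -
  have "(2::real) ^ n \<le> exp 1 ^ n"
    using exp_ge_add_one_self[of 1] by (intro power_mono) auto
  then show ?thesis by (simp flip: exp_of_nat_mult)
qed

lemma eventually_metafunnel_thresholds:
  fixes \<delta> :: real assumes "1/2 < \<delta>"
  shows "\<forall>\<^sub>F L in at_top. 400 \<le> L \<and> 4 \<le> L powr (2*\<delta> - 1) \<and> 28 + 100 * L \<le> exp (sqrt L / 2)"
proof -
  have "\<forall>\<^sub>F L in at_top. (4::real) \<le> L powr (2*\<delta> - 1)"
    using assms by real_asymp
  moreover have "\<forall>\<^sub>F L in at_top. 28 + 100 * L \<le> exp (sqrt L / (2::real))"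
    by real_asymp
  ultimately show ?thesis
    by (auto intro: eventually_conj eventually_ge_at_top)
qed

lemma zeta_le_exp:
  fixes \<epsilon> \<delta> :: real and n :: nat
  assumes L: "1 \<le> ln (real n)" and "\<delta> \<le> 1 - \<epsilon>"
  shows "real n powr (- (1 / (ln (real n) powr \<epsilon>))) \<le> exp (- (ln (real n) powr \<delta>))"
proof -
  have n: "real n > 0" using L by (cases n) auto
  have "real n powr (- (1 / (ln (real n) powr \<epsilon>))) = exp (- (ln (real n) / ln (real n) powr \<epsilon>))"
    using n by (simp add: powr_def)
  also have "ln (real n) / ln (real n) powr \<epsilon> = ln (real n) powr (1 - \<epsilon>)"
    using L by (simp add: powr_diff)
  also have "ln (real n) powr \<delta> \<le> ln (real n) powr (1 - \<epsilon>)"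
    using L assms(2) by (intro powr_mono) auto
  then have "exp (- (ln (real n) powr (1 - \<epsilon>))) \<le> exp (- (ln (real n) powr \<delta>))" by simp
  finally show ?thesis .
qed

context metafunnel_params
begin

lemma exp_neg_lt_mean_extinction_single_layer:
  assumes k: "k = 1" and n: "1 \<le> ln (real (card V))" and x: "20 \<le> x"
  shows "exp (- x) < mean_extinction 2 (metafunnel k l m)"
proof -
  have "card V \<ge> 3"
  proof (rule ccontr)
    assume "\<not> 3 \<le> card V"
    then have "ln (real (card V)) \<le> ln 2" using card_V_pos by simp
    then show False using n ln_2_less_1 by linarith
  qed
  then have "7 / 128 \<le> mean_extinction 2 (metafunnel k l m)"
    by (rule mean_extinction_ge_single_layer[OF k])
  moreover have "21 \<le> exp x" using exp_ge_add_one_self[of x] x by linarith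
  then have "exp (- x) < 7 / 128" by (simp add: exp_minus field_simps)
  ultimately show ?thesis by linarith
qed

lemma exp_neg_lt_mean_extinction_narrow:
  assumes k: "2 \<le> k" and m: "real m < exp (x / 2)" and x: "20 \<le> x"
  shows "exp (- x) < mean_extinction 2 (metafunnel k l m)"
proof -
  define t where "t = exp (x / 2)"
  have "4 \<le> t" using exp_ge_add_one_self[of "x/2"] x unfolding t_def by linarith
  have "3 * (real m + 1) < 3 * t + 3" using m by (simp add: t_def)
  also have "\<dots> \<le> t * t"
  proof -
    have "4 * t \<le> t * t" using \<open>4 \<le> t\<close> by (intro mult_right_mono) auto
    then show ?thesis using \<open>4 \<le> t\<close> by linarith
  qed
  also have "t * t = exp x" by (simp add: t_def flip: exp_add)
  finally have "1 / exp x < 1 / (3 * (real m + 1))" by (intro divide_strict_left_mono) auto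
  then show ?thesis
    using mean_extinction_ge_lower_layers[OF k] by (simp add: exp_minus inverse_eq_divide)
qed

lemma exp_neg_lt_mean_extinction_wide:
  assumes k: "2 \<le> k" and m: "exp (x / 2) \<le> real m" "28 + 100 * L \<le> real m"
    and L: "L = ln (real (card V))" "400 \<le> L" and x: "4 * L \<le> x * x" "20 \<le> x"
  shows "exp (- x) < mean_extinction 2 (metafunnel k l m)"
proof -
  have H: "4 * L + (2 * real k + 7) * ln 2 \<le> real m / 4 * (real k + 2) * ln 2"
  proof -
    have "25 * L * 4 \<le> 25 * L * (real k + 2)" using k L(2) by (intro mult_left_mono) auto
    then have "(2 * real k + 7) + 100 * L \<le> (7 + 25 * L) * (real k + 2)"
      by (simp add: algebra_simps)
    also have "\<dots> \<le> real m / 4 * (real k + 2)" using m(2) by (intro mult_right_mono) auto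
    finally have "((2 * real k + 7) + 100 * L) * ln 2 \<le> real m / 4 * (real k + 2) * ln 2"
      by (intro mult_right_mono) auto
    moreover have "L * 4 \<le> L * (100 * ln 2)"
      using ln_2_ge_half L(2) by (intro mult_left_mono) auto
    ultimately show ?thesis by (simp add: algebra_simps)
  qed
  have mean: "1 / (6 * 2 ^ (k+2)) \<le> mean_extinction 2 (metafunnel k l m)"
    using m(2) L by (intro mean_extinction_ge_wide[OF k _ H[unfolded L(1)]]) linarith
  have "x / 2 \<le> ln (real m)" using m(1) mpos by (subst ln_ge_iff) auto
  then have "real k * (x / 2) \<le> real k * ln (real m)" by (intro mult_left_mono) auto
  also have "real k * ln (real m) = ln (real m ^ k)" using mpos by (simp add: ln_realpow)
  also have "\<dots> \<le> L"
    unfolding L(1) using card_V_ge(3) card_V_pos mpos by (subst ln_le_cancel_iff) (auto simp flip: of_nat_power)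
  finally have "real k * (x / 2) \<le> (x / 2) * (x / 2)" using x(1) by (simp add: field_simps)
  then have kx: "real k \<le> x / 2" using x(2) by (simp add: mult_le_cancel_right_pos)
  have "6 * 2 ^ (k+2) \<le> exp 3 * exp (real (k+2))"
    using two_pow_le_exp[of 3] two_pow_le_exp[of "k+2"] by (intro mult_mono) auto
  also have "\<dots> = exp (real k + 5)" by (simp flip: exp_add)
  also have "\<dots> < exp x" using kx x by simp
  finally have "1 / exp x < 1 / (6 * 2 ^ (k+2))" by (intro divide_strict_left_mono) auto
  then show ?thesis using mean by (simp add: exp_minus inverse_eq_divide)
qed

lemma exp_neg_lt_mean_extinction:
  assumes L: "L = ln (real (card V))" "400 \<le> L" and x: "sqrt L \<le> x" "4 * L \<le> x * x"
    and tail: "28 + 100 * L \<le> exp (sqrt L / 2)"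
  shows "exp (- x) < mean_extinction 2 (metafunnel k l m)"
proof -
  have "20 \<le> sqrt L" using L(2) real_sqrt_le_mono[of 400 L] by simp
  then have x20: "20 \<le> x" using x by linarith
  consider "k = 1" | "2 \<le> k" "real m < exp (x / 2)" | "2 \<le> k" "exp (x / 2) \<le> real m"
    using kpos by linarith
  then show ?thesis
  proof cases
    case 1
    then show ?thesis using exp_neg_lt_mean_extinction_single_layer L x20 by simp
  next
    case 2
    then show ?thesis using exp_neg_lt_mean_extinction_narrow x20 by simp
  next
    case 3
    moreover have "exp (sqrt L / 2) \<le> exp (x / 2)" using x by simp
    ultimately have "28 + 100 * L \<le> real m" using tail by linarith
    with 3 show ?thesis by (intro exp_neg_lt_mean_extinction_wide[OF _ _ _ L x(2) x20]) auto
  qed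
qed

end

lemma eventually_zeta_lt_mean_extinction:
  fixes \<epsilon> :: real assumes "\<epsilon> < 1/2"
  obtains N where "\<And>k l m. 0 < k \<Longrightarrow> 0 < l \<Longrightarrow> 0 < m \<Longrightarrow> N \<le> card (fst (metafunnel k l m)) \<Longrightarrow>
     real (card (fst (metafunnel k l m))) powr (- (1 / (ln (real (card (fst (metafunnel k l m)))) powr \<epsilon>)))
       < mean_extinction 2 (metafunnel k l m)"
proof -
  \<comment> \<open>Any exponent \<delta> with 1/2 < \<delta> \<le> 1 - \<epsilon> works.\<close>
  define \<delta> where "\<delta> = 1 - max \<epsilon> (1/4)"
  have \<delta>: "1/2 < \<delta>" "\<delta> \<le> 1 - \<epsilon>" using assms by (auto simp: \<delta>_def)
  obtain L0 where L0: "\<And>L. L0 \<le> L \<Longrightarrow> 400 \<le> L \<and> 4 \<le> L powr (2*\<delta> - 1) \<and> 28 + 100 * L \<le> exp (sqrt L / 2)"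
    using eventually_metafunnel_thresholds[OF \<delta>(1)] by (auto simp: eventually_at_top_linorder)
  show ?thesis
  proof (rule that[of "nat \<lceil>exp L0\<rceil>"])
    fix k l m assume "0 < k" "0 < l" "0 < m" and N: "nat \<lceil>exp L0\<rceil> \<le> card (fst (metafunnel k l m))"
    then interpret metafunnel_params k l m by unfold_locales
    define L where "L = ln (real (card V))"
    have "exp L0 \<le> real (card V)" using N by (simp add: V_def)
    then have "L0 \<le> L" using card_V_pos by (simp add: L_def ln_ge_iff)
    then have L: "400 \<le> L" "4 \<le> L powr (2*\<delta> - 1)" "28 + 100 * L \<le> exp (sqrt L / 2)"
      using L0 by auto
    have "sqrt L \<le> L powr \<delta>"
      using L(1) \<delta>(1) powr_mono[of "1/2" \<delta> L] by (simp add: powr_half_sqrt)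
    moreover have "4 * L \<le> L powr \<delta> * L powr \<delta>"
    proof -
      have "L powr \<delta> * L powr \<delta> = L powr (1 + (2*\<delta> - 1))"
        unfolding powr_add[symmetric] by (simp add: algebra_simps)
      also have "\<dots> = L * L powr (2*\<delta> - 1)" using L(1) by (subst powr_add) simp
      finally show ?thesis using L(1,2) by simp
    qed
    ultimately have "exp (- (L powr \<delta>)) < mean_extinction 2 (metafunnel k l m)"
      using exp_neg_lt_mean_extinction L(1,3) L_def by blast
    moreover have "real (card V) powr (- (1 / (L powr \<epsilon>))) \<le> exp (- (L powr \<delta>))"
      unfolding L_def using L(1) \<delta>(2) by (intro zeta_le_exp) (auto simp: L_def)
    ultimately show "real (card (fst (metafunnel k l m))) powr
        (- (1 / (ln (real (card (fst (metafunnel k l m)))) powr \<epsilon>))) < mean_extinction 2 (metafunnel k l m)"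
      by (simp add: L_def V_def)
  qed
qed

lemma card_metafunnel_gt:
  assumes "0 < k" "0 < l" "0 < m"
  shows "k < card (fst (metafunnel k l m))" "l < card (fst (metafunnel k l m))" "m < card (fst (metafunnel k l m))"
proof -
  interpret metafunnel_params k l m using assms by unfold_locales
  have "m \<le> m ^ k" using assms power_increasing[of 1 k m] by simp
  moreover have "k \<le> l * k" "l \<le> l * k" "m ^ k \<le> l * m ^ k" using assms by simp_all
  moreover have "card (fst (metafunnel k l m)) = card V" by (simp add: V_def)
  ultimately show "k < card (fst (metafunnel k l m))" "l < card (fst (metafunnel k l m))"
    "m < card (fst (metafunnel k l m))"
    using card_V_ge(1,4) by linarith+
qed

lemma finite_small_metafunnels: "finite {G. is_metafunnel G \<and> card (fst G) < M}"
proof (rule finite_subset)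
  show "{G. is_metafunnel G \<and> card (fst G) < M}
      \<subseteq> (\<lambda>(k,l,m). metafunnel k l m) ` ({..<M} \<times> {..<M} \<times> {..<M})"
  proof
    fix G assume "G \<in> {G. is_metafunnel G \<and> card (fst G) < M}"
    then obtain k l m where G: "G = metafunnel k l m" "0 < k" "0 < l" "0 < m" and "card (fst G) < M"
      by (auto simp: is_metafunnel_def)
    then have "k < M" "l < M" "m < M" using card_metafunnel_gt[OF G(2-4)] by auto
    then show "G \<in> (\<lambda>(k,l,m). metafunnel k l m) ` ({..<M} \<times> {..<M} \<times> {..<M})"
      using G(1) by force
  qed
qed simp

theorem theorem1p10:
  fixes \<epsilon> :: real
  assumes "\<epsilon> < 1/2"
  shows "\<not> (\<exists>\<Upsilon> :: (nat \<times> nat \<times> nat) digraph set.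
             infinite \<Upsilon> \<and> (\<forall>G\<in>\<Upsilon>. is_metafunnel G) \<and>
             up_to_fixating (\<lambda>r n. real n powr (- (1 / (ln (real n) powr \<epsilon>)))) \<Upsilon>)"
proof
  let ?\<zeta> = "\<lambda>n::nat. real n powr (- (1 / (ln (real n) powr \<epsilon>)))"
  assume "\<exists>\<Upsilon> :: (nat \<times> nat \<times> nat) digraph set.
             infinite \<Upsilon> \<and> (\<forall>G\<in>\<Upsilon>. is_metafunnel G) \<and> up_to_fixating (\<lambda>r. ?\<zeta>) \<Upsilon>"
  then obtain \<Upsilon> :: "(nat \<times> nat \<times> nat) digraph set" where
    inf: "infinite \<Upsilon>" and mf: "\<forall>G\<in>\<Upsilon>. is_metafunnel G" and up: "up_to_fixating (\<lambda>r. ?\<zeta>) \<Upsilon>"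
    by blast
  have "(2::real) > 1" by simp
  with up obtain n0 where n0: "\<And>G. G \<in> \<Upsilon> \<Longrightarrow> n0 \<le> card (fst G) \<Longrightarrow> mean_extinction 2 G \<le> ?\<zeta> (card (fst G))"
    unfolding up_to_fixating_def by blast
  obtain N where N: "\<And>k l m. 0 < k \<Longrightarrow> 0 < l \<Longrightarrow> 0 < m \<Longrightarrow> N \<le> card (fst (metafunnel k l m)) \<Longrightarrow>
      ?\<zeta> (card (fst (metafunnel k l m))) < mean_extinction 2 (metafunnel k l m)"
    using eventually_zeta_lt_mean_extinction[OF assms] by blast
  have "\<not> \<Upsilon> \<subseteq> {G. is_metafunnel G \<and> card (fst G) < max n0 N}"
    using inf finite_small_metafunnels finite_subset by blast
  then obtain G where "G \<in> \<Upsilon>" "\<not> (is_metafunnel G \<and> card (fst G) < max n0 N)" by blast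
  then have G: "G \<in> \<Upsilon>" "n0 \<le> card (fst G)" "N \<le> card (fst G)" using mf by auto
  obtain k l m where G_eq: "G = metafunnel k l m" and klm: "0 < k" "0 < l" "0 < m"
    using mf G(1) by (auto simp: is_metafunnel_def)
  have "?\<zeta> (card (fst G)) < mean_extinction 2 G"
    using N[OF klm] G(3) unfolding G_eq by blast
  then show False using n0[OF G(1,2)] by linarith
qed

end
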